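(* Let $\mathcal D$ be a preduoidal category and $T$ a separately opmonoidal monad on $\mathcal D$ equipped with an R-matrix $(R,\nu,\varpi,\iota)$. Then $\mathcal D^T$, with its lifted monoidal structures $(\circ,(\bot,T^\circ_0))$ and $(\bullet,(1,T^\bullet_0))$, is a duoidal category with structure morphisms $\nu,\varpi,\iota$ and interchange law $$\xi_{a,b,c,d} := ((\alpha\circ\gamma)\bullet(\beta\circ\delta))\cdot R_{a,b,c,d}\colon (a\bullet b)\circ(c\bullet d)\to(a\circ c)\bullet(b\circ d)$$ for all $T$-algebras $(a,\alpha),(b,\beta),(c,\gamma),(d,\delta)$. In particular each $\xi_{a,b,c,d}$ is a morphism of $T$-algebras.
   Context: Composition of morphisms is written $g\cdot f$ ($f$ first). A preduoidal category is a category $\mathcal D$ with two monoidal structures $(\circ,\bot)$ and $(\bullet,1)$ (associators $\alpha$, unitors $\lambda^\circ,\rho^\circ,\lambda^\bullet,\rho^\bullet$). A bimonad on a monoidal category $(\mathcal C,\otimes,I)$ is a monad $(B,\mu,\eta)$ with an opmonoidal structure $B_2\colon B(x\otimes y)\to Bx\otimes By$, $B_0\colon BI\to I$ such that $\mu,\eta$ are opmonoidal. A separately opmonoidal monad on $\mathcal D$ is a monad $(T,\mu,\eta)$ with a bimonad structure $(T^\circ_2,T^\circ_0)$ on $(\mathcal D,\circ,\bot)$ and one $(T^\bullet_2,T^\bullet_0)$ on $(\mathcal D,\bullet,1)$. Lifted monoidal structures on $\mathcal D^T$: $(a,\alpha)\circ(b,\beta)=(a\circ b,(\alpha\circ\beta)\cdot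 T^\circ_{2,a,b})$, unit $(\bot,T^\circ_0)$; $(a,\alpha)\bullet(b,\beta)=(a\bullet b,(\alpha\bullet\beta)\cdot T^\bullet_{2,a,b})$, unit $(1,T^\bullet_0)$. Duoidal category: a preduoidal category with a natural transformation $\zeta_{x,y,a,b}\colon (x\bullet y)\circ(a\bullet b)\to(x\circ a)\bullet(y\circ b)$ and morphisms $\nu\colon\bot\to\bot\bullet\bot$, $\varpi\colon 1\circ 1\to 1$, $\iota\colon\bot\to 1$ such that $(1,\varpi,\iota)$ is a monoid in $(\mathcal D,\circ,\bot)$, $(\bot,\nu,\iota)$ is a comonoid in $(\mathcal D,\bullet,1)$, and: (A1) $(\alpha\bullet\alpha)\cdot\zeta_{x\circ a,y\circ b,c,d}\cdot(\zeta_{x,y,a,b}\circ\mathrm{id}) = \zeta_{x,y,a\circ c,b\circ d}\cdot(\mathrm{id}\circ\zeta_{a,b,c,d})\cdot\alpha$; (A2) $\alpha\cdot(\zeta_{x,a,y,b}\bullet\mathrm{id})\cdot\zeta_{x\bullet a,c,y\bullet b,d} = (\mathrm{id}\bullet\zeta_{a,c,b,d})\cdot\zeta_{x,a\bullet c,y,b\bullet d}\cdot(\alpha\circ\alpha)$; (U) $\zeta_{\bot,\bot,a,b}\cdot(\nu\circ\mathrm{id})=((\lambda^\circ_a)^{-1}\bullet(\lambda^\circ_b)^{-1})\cdot\lambda^\circ_{a\bullet b}$, $\zeta_{a,b,\bot,\bot}\cdot(\mathrm{id}\circ\nu)=((\rho^\circ_a)^{-1}\bullet(\rho^\circ_b)^{-1})\cdot\rho^\circ_{a\bullet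 b}$, $(\varpi\bullet\mathrm{id})\cdot\zeta_{1,a,1,b}=(\lambda^\bullet_{a\circ b})^{-1}\cdot(\lambda^\bullet_a\circ\lambda^\bullet_b)$, $(\mathrm{id}\bullet\varpi)\cdot\zeta_{a,1,b,1}=(\rho^\bullet_{a\circ b})^{-1}\cdot(\rho^\bullet_a\circ\rho^\bullet_b)$. For $\mathcal D^T$ all data are required to be morphisms of $T$-algebras. R-matrix on $T$: a natural transformation $R_{a,b,c,d}\colon (a\bullet b)\circ(c\bullet d)\to(Ta\circ Tc)\bullet(Tb\circ Td)$ together with morphisms of $T$-algebras $\nu\colon(\bot,T^\circ_0)\to(\bot,T^\circ_0)\bullet(\bot,T^\circ_0)$, $\varpi\colon(1,T^\bullet_0)\circ(1,T^\bullet_0)\to(1,T^\bullet_0)$, $\iota\colon(\bot,T^\circ_0)\to(1,T^\bullet_0)$, such that $(1,\varpi,\iota)$ is a monoid in $(\mathcal D^T,\circ,\bot)$, $(\bot,\nu,\iota)$ is a comonoid in $(\mathcal D^T,\bullet,1)$, and (associators suppressed): (R-unit) for all $T$-algebras $(a,\alpha),(b,\beta)$: $((T^\circ_0\circ\alpha)\bullet(T^\circ_0\circ\beta))\cdot R_{\bot,\bot,a,b}\cdot(\nu\circ\mathrm{id})=((\lambda^\circ_a)^{-1}\bullet(\lambda^\circ_b)^{-1})\cdot\lambda^\circ_{a\bullet b}$; $((\alpha\circ T^\circ_0)\bullet(\beta\circ T^\circ_0))\cdot R_{a,b,\bot,\bot}\cdot(\mathrm{id}\circ\nu)=((\rho^\circ_a)^{-1}\bullet(\rho^\circ_b)^{-1})\cdot\rho^\circ_{a\bullet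 b}$; $(\varpi\bullet\mathrm{id})\cdot((T^\bullet_0\circ T^\bullet_0)\bullet(\alpha\circ\beta))\cdot R_{1,a,1,b}=(\lambda^\bullet_{a\circ b})^{-1}\cdot(\lambda^\bullet_a\circ\lambda^\bullet_b)$; $(\mathrm{id}\bullet\varpi)\cdot((\alpha\circ\beta)\bullet(T^\bullet_0\circ T^\bullet_0))\cdot R_{a,1,b,1}=(\rho^\bullet_{a\circ b})^{-1}\cdot(\rho^\bullet_a\circ\rho^\bullet_b)$. (R-lift) for all objects: $((\mu_a\circ\mu_c)\bullet(\mu_b\circ\mu_d))\cdot R_{Ta,Tb,Tc,Td}\cdot(T^\bullet_{2,a,b}\circ T^\bullet_{2,c,d})\cdot T^\circ_{2,a\bullet b,c\bullet d} = ((\mu_a\circ\mu_c)\bullet(\mu_b\circ\mu_d))\cdot(T^\circ_{2,Ta,Tc}\bullet T^\circ_{2,Tb,Td})\cdot T^\bullet_{2,Ta\circ Tc,Tb\circ Td}\cdot TR_{a,b,c,d}$. (R-1) for all objects: $((\mu_a\circ\mu_c\circ Tx)\bullet(\mu_b\circ\mu_d\circ Ty))\cdot((T^\circ_{2,Ta,Tc}\circ Tx)\bullet(T^\circ_{2,Tb,Td}\circ Ty))\cdot R_{Ta\circ Tc,Tb\circ Td,x,y}\cdot(R_{a,b,c,d}\circ\mathrm{id}) = ((Ta\circ\mu_c\circ\mu_x)\bullet(Tb\circ\mu_d\circ\mu_y))\cdot((Ta\circ T^\circ_{2,Tc,Tx})\bullet(Tb\circ T^\circ_{2,Td,Ty}))\cdot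 R_{a,b,Tc\circ Tx,Td\circ Ty}\cdot(\mathrm{id}\circ R_{c,d,x,y})$. (R-2) for all objects: $(((\mu_x\circ\mu_y)\bullet(\mu_a\circ\mu_b))\bullet\mathrm{id})\cdot(R_{Tx,Ta,Ty,Tb}\bullet\mathrm{id})\cdot((T^\bullet_{2,x,a}\circ T^\bullet_{2,y,b})\bullet\mathrm{id})\cdot R_{x\bullet a,c,y\bullet b,d} = (\mathrm{id}\bullet((\mu_a\circ\mu_b)\bullet(\mu_c\circ\mu_d)))\cdot(\mathrm{id}\bullet R_{Ta,Tc,Tb,Td})\cdot(\mathrm{id}\bullet(T^\bullet_{2,a,c}\circ T^\bullet_{2,b,d}))\cdot R_{x,a\bullet c,y,b\bullet d}\cdot(\alpha\circ\alpha)$. *)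

theory Defs
  imports Main
begin

text \<open>Elementary category theory, developed from scratch (no library for it).
  Composition: Cmp C g f is "g after f" (written g . f in the paper).\<close>

record ('o,'m) cat =
  Obj :: "'o set"
  Arr :: "'m set"
  Dom :: "'m \<Rightarrow> 'o"
  Cod :: "'m \<Rightarrow> 'o"
  Idt :: "'o \<Rightarrow> 'm"
  Cmp :: "'m \<Rightarrow> 'm \<Rightarrow> 'm"

definition hom :: "('o,'m) cat \<Rightarrow> 'o \<Rightarrow> 'o \<Rightarrow> 'm set" where
  "hom C x y = {f \<in> Arr C. Dom C f = x \<and> Cod C f = y}"

definition category :: "('o,'m) cat \<Rightarrow> bool" where
  "category C \<longleftrightarrow>
    (\<forall>f\<in>Arr C. Dom C f \<in> Obj C \<and> Cod C f \<in> Obj C) \<and>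
    (\<forall>x\<in>Obj C. Idt C x \<in> hom C x x) \<and>
    (\<forall>f\<in>Arr C. \<forall>g\<in>Arr C. Cod C f = Dom C g \<longrightarrow> Cmp C g f \<in> hom C (Dom C f) (Cod C g)) \<and>
    (\<forall>f\<in>Arr C. Cmp C f (Idt C (Dom C f)) = f \<and> Cmp C (Idt C (Cod C f)) f = f) \<and>
    (\<forall>f\<in>Arr C. \<forall>g\<in>Arr C. \<forall>h\<in>Arr C. Cod C f = Dom C g \<longrightarrow> Cod C g = Dom C h \<longrightarrow>
        Cmp C h (Cmp C g f) = Cmp C (Cmp C h g) f)"

definition inverse_arr :: "('o,'m) cat \<Rightarrow> 'm \<Rightarrow> 'm \<Rightarrow> bool" where
  "inverse_arr C f g \<longleftrightarrow> f \<in> Arr C \<and> g \<in> hom C (Cod C f) (Dom C f) \<and>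
     Cmp C g f = Idt C (Dom C f) \<and> Cmp C f g = Idt C (Cod C f)"

definition iso :: "('o,'m) cat \<Rightarrow> 'm \<Rightarrow> bool" where
  "iso C f \<longleftrightarrow> (\<exists>g. inverse_arr C f g)"

definition cinv :: "('o,'m) cat \<Rightarrow> 'm \<Rightarrow> 'm" where
  "cinv C f = (SOME g. inverse_arr C f g)"

definition "functor" :: "('o,'m) cat \<Rightarrow> ('o \<Rightarrow> 'o) \<Rightarrow> ('m \<Rightarrow> 'm) \<Rightarrow> bool" where
  "functor C F Fm \<longleftrightarrow>
    (\<forall>x\<in>Obj C. F x \<in> Obj C) \<and>
    (\<forall>f\<in>Arr C. Fm f \<in> hom C (F (Dom C f)) (F (Cod C f))) \<and>
    (\<forall>x\<in>Obj C. Fm (Idt C x) = Idt C (F x)) \<and>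
    (\<forall>f\<in>Arr C. \<forall>g\<in>Arr C. Cod C f = Dom C g \<longrightarrow> Fm (Cmp C g f) = Cmp C (Fm g) (Fm f))"

definition bifunctor :: "('o,'m) cat \<Rightarrow> ('o \<Rightarrow> 'o \<Rightarrow> 'o) \<Rightarrow> ('m \<Rightarrow> 'm \<Rightarrow> 'm) \<Rightarrow> bool" where
  "bifunctor C F Fm \<longleftrightarrow>
    (\<forall>x\<in>Obj C. \<forall>y\<in>Obj C. F x y \<in> Obj C) \<and>
    (\<forall>f\<in>Arr C. \<forall>g\<in>Arr C. Fm f g \<in> hom C (F (Dom C f) (Dom C g)) (F (Cod C f) (Cod C g))) \<and>
    (\<forall>x\<in>Obj C. \<forall>y\<in>Obj C. Fm (Idt C x) (Idt C y) = Idt C (F x y)) \<and>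
    (\<forall>f\<in>Arr C. \<forall>f'\<in>Arr C. \<forall>g\<in>Arr C. \<forall>g'\<in>Arr C.
        Cod C f = Dom C f' \<longrightarrow> Cod C g = Dom C g' \<longrightarrow>
        Fm (Cmp C f' f) (Cmp C g' g) = Cmp C (Fm f' g') (Fm f g))"

record ('o,'m) mon =
  Ten :: "'o \<Rightarrow> 'o \<Rightarrow> 'o"
  TenM :: "'m \<Rightarrow> 'm \<Rightarrow> 'm"
  MUnit :: 'o
  Asc :: "'o \<Rightarrow> 'o \<Rightarrow> 'o \<Rightarrow> 'm"
  Lu :: "'o \<Rightarrow> 'm"
  Ru :: "'o \<Rightarrow> 'm"

definition monoidal :: "('o,'m) cat \<Rightarrow> ('o,'m) mon \<Rightarrow> bool" where
  "monoidal C M \<longleftrightarrow> category C \<and> bifunctor C (Ten M) (TenM M) \<and> MUnit M \<in> Obj C \<and>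
    (\<forall>x\<in>Obj C. \<forall>y\<in>Obj C. \<forall>z\<in>Obj C.
       Asc M x y z \<in> hom C (Ten M (Ten M x y) z) (Ten M x (Ten M y z)) \<and> iso C (Asc M x y z)) \<and>
    (\<forall>x\<in>Obj C. Lu M x \<in> hom C (Ten M (MUnit M) x) x \<and> iso C (Lu M x)) \<and>
    (\<forall>x\<in>Obj C. Ru M x \<in> hom C (Ten M x (MUnit M)) x \<and> iso C (Ru M x)) \<and>
    (\<forall>f\<in>Arr C. \<forall>g\<in>Arr C. \<forall>h\<in>Arr C.
       Cmp C (Asc M (Cod C f) (Cod C g) (Cod C h)) (TenM M (TenM M f g) h)
       = Cmp C (TenM M f (TenM M g h)) (Asc M (Dom C f) (Dom C g) (Dom C h))) \<and>
    (\<forall>f\<in>Arr C. Cmp C (Lu M (Cod C f)) (TenM M (Idt C (MUnit M)) f) = Cmp C f (Lu M (Dom C f))) \<and>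
    (\<forall>f\<in>Arr C. Cmp C (Ru M (Cod C f)) (TenM M f (Idt C (MUnit M))) = Cmp C f (Ru M (Dom C f))) \<and>
    (\<forall>w\<in>Obj C. \<forall>x\<in>Obj C. \<forall>y\<in>Obj C. \<forall>z\<in>Obj C.
       Cmp C (Asc M w x (Ten M y z)) (Asc M (Ten M w x) y z)
       = Cmp C (TenM M (Idt C w) (Asc M x y z))
           (Cmp C (Asc M w (Ten M x y) z) (TenM M (Asc M w x y) (Idt C z)))) \<and>
    (\<forall>x\<in>Obj C. \<forall>y\<in>Obj C.
       Cmp C (TenM M (Idt C x) (Lu M y)) (Asc M x (MUnit M) y) = TenM M (Ru M x) (Idt C y))"

text \<open>A preduoidal category: one category with two monoidal structures
  (M1 = (circ, bot), M2 = (bullet, 1)).\<close>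
definition preduoidal :: "('o,'m) cat \<Rightarrow> ('o,'m) mon \<Rightarrow> ('o,'m) mon \<Rightarrow> bool" where
  "preduoidal C M1 M2 \<longleftrightarrow> monoidal C M1 \<and> monoidal C M2"

definition monoid_obj :: "('o,'m) cat \<Rightarrow> ('o,'m) mon \<Rightarrow> 'o \<Rightarrow> 'm \<Rightarrow> 'm \<Rightarrow> bool" where
  "monoid_obj C M m mu e \<longleftrightarrow> m \<in> Obj C \<and> mu \<in> hom C (Ten M m m) m \<and> e \<in> hom C (MUnit M) m \<and>
    Cmp C mu (TenM M mu (Idt C m)) = Cmp C mu (Cmp C (TenM M (Idt C m) mu) (Asc M m m m)) \<and>
    Cmp C mu (TenM M e (Idt C m)) = Lu M m \<and>
    Cmp C mu (TenM M (Idt C m) e) = Ru M m"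

definition comonoid_obj :: "('o,'m) cat \<Rightarrow> ('o,'m) mon \<Rightarrow> 'o \<Rightarrow> 'm \<Rightarrow> 'm \<Rightarrow> bool" where
  "comonoid_obj C M c delta e \<longleftrightarrow> c \<in> Obj C \<and> delta \<in> hom C c (Ten M c c) \<and> e \<in> hom C c (MUnit M) \<and>
    Cmp C (Asc M c c c) (Cmp C (TenM M delta (Idt C c)) delta) = Cmp C (TenM M (Idt C c) delta) delta \<and>
    Cmp C (TenM M e (Idt C c)) delta = cinv C (Lu M c) \<and>
    Cmp C (TenM M (Idt C c) e) delta = cinv C (Ru M c)"

definition duoidal :: "('o,'m) cat \<Rightarrow> ('o,'m) mon \<Rightarrow> ('o,'m) mon \<Rightarrow>
    ('o \<Rightarrow> 'o \<Rightarrow> 'o \<Rightarrow> 'o \<Rightarrow> 'm) \<Rightarrow> 'm \<Rightarrow> 'm \<Rightarrow> 'm \<Rightarrow> bool" where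
  "duoidal C M1 M2 z nu varpi iota \<longleftrightarrow>
   (let cp = Cmp C; i = Idt C; Ot = Ten M1; OM = TenM M1; Bt = Ten M2; BM = TenM M2;
        Bot = MUnit M1; One = MUnit M2 in
    preduoidal C M1 M2 \<and>
    (\<forall>x\<in>Obj C. \<forall>y\<in>Obj C. \<forall>a\<in>Obj C. \<forall>b\<in>Obj C.
       z x y a b \<in> hom C (Ot (Bt x y) (Bt a b)) (Bt (Ot x a) (Ot y b))) \<and>
    (\<forall>f\<in>Arr C. \<forall>g\<in>Arr C. \<forall>h\<in>Arr C. \<forall>k\<in>Arr C.
       cp (z (Cod C f) (Cod C g) (Cod C h) (Cod C k)) (OM (BM f g) (BM h k))
       = cp (BM (OM f h) (OM g k)) (z (Dom C f) (Dom C g) (Dom C h) (Dom C k))) \<and>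
    monoid_obj C M1 One varpi iota \<and>
    comonoid_obj C M2 Bot nu iota \<and>
    (\<forall>x\<in>Obj C. \<forall>y\<in>Obj C. \<forall>a\<in>Obj C. \<forall>b\<in>Obj C. \<forall>c\<in>Obj C. \<forall>d\<in>Obj C.
       cp (BM (Asc M1 x a c) (Asc M1 y b d)) (cp (z (Ot x a) (Ot y b) c d) (OM (z x y a b) (i (Bt c d))))
       = cp (z x y (Ot a c) (Ot b d)) (cp (OM (i (Bt x y)) (z a b c d)) (Asc M1 (Bt x y) (Bt a b) (Bt c d)))) \<and>
    (\<forall>x\<in>Obj C. \<forall>y\<in>Obj C. \<forall>a\<in>Obj C. \<forall>b\<in>Obj C. \<forall>c\<in>Obj C. \<forall>d\<in>Obj C.
       cp (Asc M2 (Ot x y) (Ot a b) (Ot c d)) (cp (BM (z x a y b) (i (Ot c d))) (z (Bt x a) c (Bt y b) d))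
       = cp (BM (i (Ot x y)) (z a c b d)) (cp (z x (Bt a c) y (Bt b d)) (OM (Asc M2 x a c) (Asc M2 y b d)))) \<and>
    (\<forall>a\<in>Obj C. \<forall>b\<in>Obj C.
       cp (z Bot Bot a b) (OM nu (i (Bt a b)))
         = cp (BM (cinv C (Lu M1 a)) (cinv C (Lu M1 b))) (Lu M1 (Bt a b)) \<and>
       cp (z a b Bot Bot) (OM (i (Bt a b)) nu)
         = cp (BM (cinv C (Ru M1 a)) (cinv C (Ru M1 b))) (Ru M1 (Bt a b)) \<and>
       cp (BM varpi (i (Ot a b))) (z One a One b)
         = cp (cinv C (Lu M2 (Ot a b))) (OM (Lu M2 a) (Lu M2 b)) \<and>
       cp (BM (i (Ot a b)) varpi) (z a One b One)
         = cp (cinv C (Ru M2 (Ot a b))) (OM (Ru M2 a) (Ru M2 b))))"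

record ('o,'m) monad =
  TO :: "'o \<Rightarrow> 'o"
  TM :: "'m \<Rightarrow> 'm"
  Mu :: "'o \<Rightarrow> 'm"
  Eta :: "'o \<Rightarrow> 'm"

definition monad :: "('o,'m) cat \<Rightarrow> ('o,'m) monad \<Rightarrow> bool" where
  "monad C T \<longleftrightarrow> category C \<and> functor C (TO T) (TM T) \<and>
    (\<forall>x\<in>Obj C. Mu T x \<in> hom C (TO T (TO T x)) (TO T x) \<and> Eta T x \<in> hom C x (TO T x)) \<and>
    (\<forall>f\<in>Arr C. Cmp C (Mu T (Cod C f)) (TM T (TM T f)) = Cmp C (TM T f) (Mu T (Dom C f))) \<and>
    (\<forall>f\<in>Arr C. Cmp C (Eta T (Cod C f)) f = Cmp C (TM T f) (Eta T (Dom C f))) \<and>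
    (\<forall>x\<in>Obj C. Cmp C (Mu T x) (TM T (Mu T x)) = Cmp C (Mu T x) (Mu T (TO T x))) \<and>
    (\<forall>x\<in>Obj C. Cmp C (Mu T x) (Eta T (TO T x)) = Idt C (TO T x)) \<and>
    (\<forall>x\<in>Obj C. Cmp C (Mu T x) (TM T (Eta T x)) = Idt C (TO T x))"

definition bimonad :: "('o,'m) cat \<Rightarrow> ('o,'m) mon \<Rightarrow> ('o,'m) monad \<Rightarrow>
    ('o \<Rightarrow> 'o \<Rightarrow> 'm) \<Rightarrow> 'm \<Rightarrow> bool" where
  "bimonad C M T T2 T0 \<longleftrightarrow>
   (let cp = Cmp C; i = Idt C; Ot = Ten M; OM = TenM M; I = MUnit M;
        t = TO T; tm = TM T in
    monoidal C M \<and> monad C T \<and>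
    (\<forall>x\<in>Obj C. \<forall>y\<in>Obj C. T2 x y \<in> hom C (t (Ot x y)) (Ot (t x) (t y))) \<and>
    T0 \<in> hom C (t I) I \<and>
    (\<forall>f\<in>Arr C. \<forall>g\<in>Arr C.
       cp (T2 (Cod C f) (Cod C g)) (tm (OM f g)) = cp (OM (tm f) (tm g)) (T2 (Dom C f) (Dom C g))) \<and>
    (\<forall>x\<in>Obj C. \<forall>y\<in>Obj C. \<forall>z\<in>Obj C.
       cp (Asc M (t x) (t y) (t z)) (cp (OM (T2 x y) (i (t z))) (T2 (Ot x y) z))
       = cp (OM (i (t x)) (T2 y z)) (cp (T2 x (Ot y z)) (tm (Asc M x y z)))) \<and>
    (\<forall>x\<in>Obj C. cp (Lu M (t x)) (cp (OM T0 (i (t x))) (T2 I x)) = tm (Lu M x)) \<and>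
    (\<forall>x\<in>Obj C. cp (Ru M (t x)) (cp (OM (i (t x)) T0) (T2 x I)) = tm (Ru M x)) \<and>
    (\<forall>x\<in>Obj C. \<forall>y\<in>Obj C.
       cp (T2 x y) (Mu T (Ot x y)) = cp (OM (Mu T x) (Mu T y)) (cp (T2 (t x) (t y)) (tm (T2 x y)))) \<and>
    cp T0 (Mu T I) = cp T0 (tm T0) \<and>
    (\<forall>x\<in>Obj C. \<forall>y\<in>Obj C. cp (T2 x y) (Eta T (Ot x y)) = OM (Eta T x) (Eta T y)) \<and>
    cp T0 (Eta T I) = i I)"

definition sep_opmonoidal_monad :: "('o,'m) cat \<Rightarrow> ('o,'m) mon \<Rightarrow> ('o,'m) mon \<Rightarrow> ('o,'m) monad \<Rightarrow>
    ('o \<Rightarrow> 'o \<Rightarrow> 'm) \<Rightarrow> 'm \<Rightarrow> ('o \<Rightarrow> 'o \<Rightarrow> 'm) \<Rightarrow> 'm \<Rightarrow> bool" where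
  "sep_opmonoidal_monad C M1 M2 T T2c T0c T2b T0b \<longleftrightarrow>
     preduoidal C M1 M2 \<and> monad C T \<and> bimonad C M1 T T2c T0c \<and> bimonad C M2 T T2b T0b"

text \<open>Eilenberg--Moore category D^T. Objects: T-algebras (a, alpha).
  Arrows: triples (A, Bt, f) with f : A -> Bt a morphism of T-algebras.\<close>
definition algebra :: "('o,'m) cat \<Rightarrow> ('o,'m) monad \<Rightarrow> 'o \<times> 'm \<Rightarrow> bool" where
  "algebra C T A \<longleftrightarrow> fst A \<in> Obj C \<and> snd A \<in> hom C (TO T (fst A)) (fst A) \<and>
     Cmp C (snd A) (Eta T (fst A)) = Idt C (fst A) \<and>
     Cmp C (snd A) (TM T (snd A)) = Cmp C (snd A) (Mu T (fst A))"

definition alg_hom :: "('o,'m) cat \<Rightarrow> ('o,'m) monad \<Rightarrow> 'o \<times> 'm \<Rightarrow> 'o \<times> 'm \<Rightarrow> 'm \<Rightarrow> bool" where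
  "alg_hom C T A Bt f \<longleftrightarrow> algebra C T A \<and> algebra C T Bt \<and> f \<in> hom C (fst A) (fst Bt) \<and>
     Cmp C f (snd A) = Cmp C (snd Bt) (TM T f)"

type_synonym ('o,'m) em_arr = "('o \<times> 'm) \<times> ('o \<times> 'm) \<times> 'm"

definition EM :: "('o,'m) cat \<Rightarrow> ('o,'m) monad \<Rightarrow> ('o \<times> 'm, ('o,'m) em_arr) cat" where
  "EM C T = \<lparr> Obj = {A. algebra C T A},
              Arr = {p. alg_hom C T (fst p) (fst (snd p)) (snd (snd p))},
              Dom = (\<lambda>p. fst p),
              Cod = (\<lambda>p. fst (snd p)),
              Idt = (\<lambda>A. (A, A, Idt C (fst A))),
              Cmp = (\<lambda>q p. (fst p, fst (snd q), Cmp C (snd (snd q)) (snd (snd p)))) \<rparr>"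

definition lift_ten :: "('o,'m) cat \<Rightarrow> ('o,'m) mon \<Rightarrow> ('o \<Rightarrow> 'o \<Rightarrow> 'm) \<Rightarrow>
    'o \<times> 'm \<Rightarrow> 'o \<times> 'm \<Rightarrow> 'o \<times> 'm" where
  "lift_ten C M T2 A Bt = (Ten M (fst A) (fst Bt), Cmp C (TenM M (snd A) (snd Bt)) (T2 (fst A) (fst Bt)))"

definition lift_mon :: "('o,'m) cat \<Rightarrow> ('o,'m) mon \<Rightarrow> ('o \<Rightarrow> 'o \<Rightarrow> 'm) \<Rightarrow> 'm \<Rightarrow>
    ('o \<times> 'm, ('o,'m) em_arr) mon" where
  "lift_mon C M T2 T0 =
    (let t = lift_ten C M T2; U = (MUnit M, T0) in
     \<lparr> Ten = t,
       TenM = (\<lambda>p q. (t (fst p) (fst q), t (fst (snd p)) (fst (snd q)), TenM M (snd (snd p)) (snd (snd q)))),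
       MUnit = U,
       Asc = (\<lambda>A Bt D. (t (t A Bt) D, t A (t Bt D), Asc M (fst A) (fst Bt) (fst D))),
       Lu = (\<lambda>A. (t U A, A, Lu M (fst A))),
       Ru = (\<lambda>A. (t A U, A, Ru M (fst A))) \<rparr>)"

text \<open>R-matrix on T (associators inserted where the paper suppresses them).
  M1 = (circ, bot) with opmonoidal structure (T2c, T0c); M2 = (bullet, 1) with (T2b, T0b).\<close>
definition rmatrix :: "('o,'m) cat \<Rightarrow> ('o,'m) mon \<Rightarrow> ('o,'m) mon \<Rightarrow> ('o,'m) monad \<Rightarrow>
    ('o \<Rightarrow> 'o \<Rightarrow> 'm) \<Rightarrow> 'm \<Rightarrow> ('o \<Rightarrow> 'o \<Rightarrow> 'm) \<Rightarrow> 'm \<Rightarrow>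
    ('o \<Rightarrow> 'o \<Rightarrow> 'o \<Rightarrow> 'o \<Rightarrow> 'm) \<Rightarrow> 'm \<Rightarrow> 'm \<Rightarrow> 'm \<Rightarrow> bool" where
  "rmatrix C M1 M2 T T2c T0c T2b T0b R nu varpi iota \<longleftrightarrow>
   (let cp = Cmp C; i = Idt C; Ot = Ten M1; OM = TenM M1; Bt = Ten M2; BM = TenM M2;
        bot = MUnit M1; one = MUnit M2; t = TO T; tm = TM T; mu = Mu T;
        E = EM C T; L1 = lift_mon C M1 T2c T0c; L2 = lift_mon C M2 T2b T0b;
        Bot = MUnit L1; One = MUnit L2 in
    (\<forall>a\<in>Obj C. \<forall>b\<in>Obj C. \<forall>c\<in>Obj C. \<forall>d\<in>Obj C.
       R a b c d \<in> hom C (Ot (Bt a b) (Bt c d)) (Bt (Ot (t a) (t c)) (Ot (t b) (t d)))) \<and>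
    (\<forall>f\<in>Arr C. \<forall>g\<in>Arr C. \<forall>h\<in>Arr C. \<forall>k\<in>Arr C.
       cp (R (Cod C f) (Cod C g) (Cod C h) (Cod C k)) (OM (BM f g) (BM h k))
       = cp (BM (OM (tm f) (tm h)) (OM (tm g) (tm k))) (R (Dom C f) (Dom C g) (Dom C h) (Dom C k))) \<and>
    comonoid_obj E L2 Bot (Bot, Ten L2 Bot Bot, nu) (Bot, One, iota) \<and>
    monoid_obj E L1 One (Ten L1 One One, One, varpi) (Bot, One, iota) \<and>
    (\<forall>A\<in>Obj E. \<forall>A'\<in>Obj E.
       let a = fst A; b = fst A'; al = snd A; be = snd A' in
       cp (BM (OM T0c al) (OM T0c be)) (cp (R bot bot a b) (OM nu (i (Bt a b))))
         = cp (BM (cinv C (Lu M1 a)) (cinv C (Lu M1 b))) (Lu M1 (Bt a b)) \<and>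
       cp (BM (OM al T0c) (OM be T0c)) (cp (R a b bot bot) (OM (i (Bt a b)) nu))
         = cp (BM (cinv C (Ru M1 a)) (cinv C (Ru M1 b))) (Ru M1 (Bt a b)) \<and>
       cp (BM varpi (i (Ot a b))) (cp (BM (OM T0b T0b) (OM al be)) (R one a one b))
         = cp (cinv C (Lu M2 (Ot a b))) (OM (Lu M2 a) (Lu M2 b)) \<and>
       cp (BM (i (Ot a b)) varpi) (cp (BM (OM al be) (OM T0b T0b)) (R a one b one))
         = cp (cinv C (Ru M2 (Ot a b))) (OM (Ru M2 a) (Ru M2 b))) \<and>
    (\<forall>a\<in>Obj C. \<forall>b\<in>Obj C. \<forall>c\<in>Obj C. \<forall>d\<in>Obj C.
       cp (BM (OM (mu a) (mu c)) (OM (mu b) (mu d)))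
          (cp (R (t a) (t b) (t c) (t d)) (cp (OM (T2b a b) (T2b c d)) (T2c (Bt a b) (Bt c d))))
       = cp (BM (OM (mu a) (mu c)) (OM (mu b) (mu d)))
          (cp (BM (T2c (t a) (t c)) (T2c (t b) (t d)))
             (cp (T2b (Ot (t a) (t c)) (Ot (t b) (t d))) (tm (R a b c d))))) \<and>
    (\<forall>a\<in>Obj C. \<forall>b\<in>Obj C. \<forall>c\<in>Obj C. \<forall>d\<in>Obj C. \<forall>x\<in>Obj C. \<forall>y\<in>Obj C.
       cp (BM (Asc M1 (t a) (t c) (t x)) (Asc M1 (t b) (t d) (t y)))
        (cp (BM (OM (OM (mu a) (mu c)) (i (t x))) (OM (OM (mu b) (mu d)) (i (t y))))
         (cp (BM (OM (T2c (t a) (t c)) (i (t x))) (OM (T2c (t b) (t d)) (i (t y))))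
          (cp (R (Ot (t a) (t c)) (Ot (t b) (t d)) x y) (OM (R a b c d) (i (Bt x y))))))
       = cp (BM (OM (i (t a)) (OM (mu c) (mu x))) (OM (i (t b)) (OM (mu d) (mu y))))
          (cp (BM (OM (i (t a)) (T2c (t c) (t x))) (OM (i (t b)) (T2c (t d) (t y))))
           (cp (R a b (Ot (t c) (t x)) (Ot (t d) (t y)))
            (cp (OM (i (Bt a b)) (R c d x y)) (Asc M1 (Bt a b) (Bt c d) (Bt x y)))))) \<and>
    (\<forall>x\<in>Obj C. \<forall>a\<in>Obj C. \<forall>y\<in>Obj C. \<forall>b\<in>Obj C. \<forall>c\<in>Obj C. \<forall>d\<in>Obj C.
       cp (Asc M2 (Ot (t x) (t y)) (Ot (t a) (t b)) (Ot (t c) (t d)))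
        (cp (BM (BM (OM (mu x) (mu y)) (OM (mu a) (mu b))) (i (Ot (t c) (t d))))
         (cp (BM (R (t x) (t a) (t y) (t b)) (i (Ot (t c) (t d))))
          (cp (BM (OM (T2b x a) (T2b y b)) (i (Ot (t c) (t d)))) (R (Bt x a) c (Bt y b) d))))
       = cp (BM (i (Ot (t x) (t y))) (BM (OM (mu a) (mu b)) (OM (mu c) (mu d))))
          (cp (BM (i (Ot (t x) (t y))) (R (t a) (t c) (t b) (t d)))
           (cp (BM (i (Ot (t x) (t y))) (OM (T2b a c) (T2b b d)))
            (cp (R x (Bt a c) y (Bt b d)) (OM (Asc M2 x a c) (Asc M2 y b d)))))))"

definition xi :: "('o,'m) cat \<Rightarrow> ('o,'m) mon \<Rightarrow> ('o,'m) mon \<Rightarrow>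
    ('o \<Rightarrow> 'o \<Rightarrow> 'm) \<Rightarrow> 'm \<Rightarrow> ('o \<Rightarrow> 'o \<Rightarrow> 'm) \<Rightarrow> 'm \<Rightarrow>
    ('o \<Rightarrow> 'o \<Rightarrow> 'o \<Rightarrow> 'o \<Rightarrow> 'm) \<Rightarrow>
    'o \<times> 'm \<Rightarrow> 'o \<times> 'm \<Rightarrow> 'o \<times> 'm \<Rightarrow> 'o \<times> 'm \<Rightarrow> ('o,'m) em_arr" where
  "xi C M1 M2 T2c T0c T2b T0b R A Bt A' Bt' =
    (let L1 = lift_mon C M1 T2c T0c; L2 = lift_mon C M2 T2b T0b in
     (Ten L1 (Ten L2 A Bt) (Ten L2 A' Bt'),
      Ten L2 (Ten L1 A A') (Ten L1 Bt Bt'),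
      Cmp C (TenM M2 (TenM M1 (snd A) (snd A')) (TenM M1 (snd Bt) (snd Bt')))
            (R (fst A) (fst Bt) (fst A') (fst Bt'))))"

end

theory Submission
  imports Defs
begin

text \<open>Each bimonad structure lifts to a monoidal structure on the Eilenberg--Moore category, since
  \<open>T\<^sub>2\<close> and \<open>T\<^sub>0\<close> turn tensors of algebras into algebras and the coherence isomorphisms of
  \<open>\<D>\<close> into algebra isomorphisms. The candidate interchange \<open>\<xi>\<close> is \<open>R\<close> followed by the algebra
  actions; (R-lift) makes it a morphism of algebras and naturality of \<open>R\<close> makes it natural. For
  the associativity axioms one pushes the actions through \<open>R\<close> by naturality and absorbs the
  occurrences of \<open>T\<^sub>2\<close> and \<open>\<mu>\<close> with the algebra laws: both sides of (A1), resp. (A2), become the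
  same action \<open>(\<chi>\<circ>(\<alpha>\<circ>\<gamma>))\<bullet>(\<psi>\<circ>(\<beta>\<circ>\<delta>))\<close>, resp. \<open>(\<chi>\<circ>\<psi>)\<bullet>((\<alpha>\<circ>\<beta>)\<bullet>(\<gamma>\<circ>\<delta>))\<close>, composed with the
  two sides of (R-1), resp. (R-2). The unit axioms are (R-unit) verbatim.\<close>

lemma in_hom_iff: "f \<in> hom C x y \<longleftrightarrow> f \<in> Arr C \<and> Dom C f = x \<and> Cod C f = y"
  by (simp add: hom_def)

locale categorical =
  fixes C :: "('o,'m) cat"
  assumes category: "category C"
begin

abbreviation comp (infixr "\<cdot>" 55) where "g \<cdot> f \<equiv> Cmp C g f"
abbreviation i where "i \<equiv> Idt C"

lemma dom_obj[simp]: "f \<in> Arr C \<Longrightarrow> Dom C f \<in> Obj C"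
  and cod_obj[simp]: "f \<in> Arr C \<Longrightarrow> Cod C f \<in> Obj C"
  using category unfolding category_def by blast+

lemma id_arr[simp]: "x \<in> Obj C \<Longrightarrow> i x \<in> Arr C"
  and id_dom[simp]: "x \<in> Obj C \<Longrightarrow> Dom C (i x) = x"
  and id_cod[simp]: "x \<in> Obj C \<Longrightarrow> Cod C (i x) = x"
  using category unfolding category_def in_hom_iff by blast+

lemma comp_arr[simp]: "f \<in> Arr C \<Longrightarrow> g \<in> Arr C \<Longrightarrow> Cod C f = Dom C g \<Longrightarrow> g \<cdot> f \<in> Arr C"
  and comp_dom[simp]: "f \<in> Arr C \<Longrightarrow> g \<in> Arr C \<Longrightarrow> Cod C f = Dom C g \<Longrightarrow> Dom C (g \<cdot> f) = Dom C f"
  and comp_cod[simp]: "f \<in> Arr C \<Longrightarrow> g \<in> Arr C \<Longrightarrow> Cod C f = Dom C g \<Longrightarrow> Cod C (g \<cdot> f) = Cod C g"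
  using category unfolding category_def in_hom_iff by blast+

lemma comp_id_right[simp]: "f \<in> Arr C \<Longrightarrow> Dom C f = x \<Longrightarrow> f \<cdot> i x = f"
  and comp_id_left[simp]: "f \<in> Arr C \<Longrightarrow> Cod C f = x \<Longrightarrow> i x \<cdot> f = f"
  using category unfolding category_def by blast+

lemma comp_assoc[simp]: "f \<in> Arr C \<Longrightarrow> g \<in> Arr C \<Longrightarrow> h \<in> Arr C \<Longrightarrow>
    Cod C f = Dom C g \<Longrightarrow> Cod C g = Dom C h \<Longrightarrow> (h \<cdot> g) \<cdot> f = h \<cdot> (g \<cdot> f)"
  using category unfolding category_def by metis

lemma comp_reassoc:
  assumes eq: "g \<cdot> f = g' \<cdot> f'"
    and "f \<in> Arr C" "g \<in> Arr C" "f' \<in> Arr C" "g' \<in> Arr C"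
    and "Cod C f = Dom C g" "Cod C f' = Dom C g'" "r \<in> Arr C" "Cod C r = Dom C f"
  shows "g \<cdot> (f \<cdot> r) = g' \<cdot> (f' \<cdot> r)"
proof -
  have "Dom C f' = Dom C (g' \<cdot> f')"
    using assms(4-) by simp
  also have "\<dots> = Dom C f"
    using assms by (simp only: eq [symmetric] comp_dom)
  finally have "g' \<cdot> (f' \<cdot> r) = (g' \<cdot> f') \<cdot> r" and "g \<cdot> (f \<cdot> r) = (g \<cdot> f) \<cdot> r"
    using assms(2-) by simp_all
  then show ?thesis
    by (simp only: eq)
qed

lemma inverse_arr_unique:
  assumes "inverse_arr C f g" and "inverse_arr C f g'"
  shows "g = g'"
proof -
  have f: "f \<in> Arr C" and g: "g \<in> Arr C" "Dom C g = Cod C f" "Cod C g = Dom C f" "g \<cdot> f = i (Dom C f)"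
    and g': "g' \<in> Arr C" "Dom C g' = Cod C f" "Cod C g' = Dom C f" "f \<cdot> g' = i (Cod C f)"
    using assms unfolding inverse_arr_def in_hom_iff by auto
  have "g = g \<cdot> i (Cod C f)"
    using g by simp
  also have "\<dots> = g \<cdot> (f \<cdot> g')"
    using g' by simp
  also have "\<dots> = (g \<cdot> f) \<cdot> g'"
    using f g g' by (intro comp_assoc[symmetric]) simp_all
  also have "\<dots> = g'"
    using g g' by simp
  finally show ?thesis .
qed

lemma cinv_inverse: "iso C f \<Longrightarrow> inverse_arr C f (cinv C f)"
  unfolding iso_def cinv_def by (rule someI_ex)

lemma cinv_eq: "inverse_arr C f g \<Longrightarrow> cinv C f = g"
  using inverse_arr_unique[OF cinv_inverse] unfolding iso_def by blast

lemma cinv_arr[simp]: "iso C f \<Longrightarrow> cinv C f \<in> Arr C"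
  and cinv_dom[simp]: "iso C f \<Longrightarrow> Dom C (cinv C f) = Cod C f"
  and cinv_cod[simp]: "iso C f \<Longrightarrow> Cod C (cinv C f) = Dom C f"
  and cinv_comp_left: "iso C f \<Longrightarrow> cinv C f \<cdot> f = i (Dom C f)"
  and cinv_comp_right: "iso C f \<Longrightarrow> f \<cdot> cinv C f = i (Cod C f)"
  using cinv_inverse[unfolded inverse_arr_def in_hom_iff] by blast+

end

lemma EM_Obj[simp]: "Obj (EM C T) = {A. algebra C T A}"
  and EM_Arr[simp]: "Arr (EM C T) = {p. alg_hom C T (fst p) (fst (snd p)) (snd (snd p))}"
  and EM_Dom[simp]: "Dom (EM C T) p = fst p"
  and EM_Cod[simp]: "Cod (EM C T) p = fst (snd p)"
  and EM_Idt[simp]: "Idt (EM C T) A = (A, A, Idt C (fst A))"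
  and EM_Cmp[simp]: "Cmp (EM C T) q p = (fst p, fst (snd q), Cmp C (snd (snd q)) (snd (snd p)))"
  by (simp_all add: EM_def)

locale monadic =
  fixes C :: "('o,'m) cat" and T :: "('o,'m) monad"
  assumes monad: "monad C T"
begin

sublocale categorical C
  using monad unfolding monad_def by unfold_locales blast

abbreviation t where "t \<equiv> TO T"
abbreviation tm where "tm \<equiv> TM T"
abbreviation mu where "mu \<equiv> Mu T"
abbreviation eta where "eta \<equiv> Eta T"

lemma functor_T: "functor C t tm"
  using monad unfolding monad_def by blast

lemma t_obj[simp]: "x \<in> Obj C \<Longrightarrow> t x \<in> Obj C"
  and tm_id[simp]: "x \<in> Obj C \<Longrightarrow> tm (i x) = i (t x)"
  using functor_T unfolding functor_def by blast+

lemma tm_arr[simp]: "f \<in> Arr C \<Longrightarrow> tm f \<in> Arr C"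
  and tm_dom[simp]: "f \<in> Arr C \<Longrightarrow> Dom C (tm f) = t (Dom C f)"
  and tm_cod[simp]: "f \<in> Arr C \<Longrightarrow> Cod C (tm f) = t (Cod C f)"
  using functor_T unfolding functor_def in_hom_iff by blast+

lemma tm_comp: "f \<in> Arr C \<Longrightarrow> g \<in> Arr C \<Longrightarrow> Cod C f = Dom C g \<Longrightarrow> tm (g \<cdot> f) = tm g \<cdot> tm f"
  using functor_T unfolding functor_def by blast

lemma mu_arr[simp]: "x \<in> Obj C \<Longrightarrow> mu x \<in> Arr C"
  and mu_dom[simp]: "x \<in> Obj C \<Longrightarrow> Dom C (mu x) = t (t x)"
  and mu_cod[simp]: "x \<in> Obj C \<Longrightarrow> Cod C (mu x) = t x"
  and eta_arr[simp]: "x \<in> Obj C \<Longrightarrow> eta x \<in> Arr C"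
  and eta_dom[simp]: "x \<in> Obj C \<Longrightarrow> Dom C (eta x) = x"
  and eta_cod[simp]: "x \<in> Obj C \<Longrightarrow> Cod C (eta x) = t x"
  using monad unfolding monad_def in_hom_iff by blast+

lemma algebra_iff: "algebra C T (a, al) \<longleftrightarrow> a \<in> Obj C \<and> al \<in> Arr C \<and> Dom C al = t a \<and> Cod C al = a \<and>
    al \<cdot> eta a = i a \<and> al \<cdot> tm al = al \<cdot> mu a"
  by (auto simp: algebra_def in_hom_iff)

lemma algebraD: "algebra C T A \<Longrightarrow> fst A \<in> Obj C \<and> snd A \<in> Arr C \<and> Dom C (snd A) = t (fst A) \<and>
    Cod C (snd A) = fst A \<and> snd A \<cdot> eta (fst A) = i (fst A) \<and> snd A \<cdot> tm (snd A) = snd A \<cdot> mu (fst A)"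
  by (cases A) (simp add: algebra_iff)

lemma alg_hom_iff: "alg_hom C T A B f \<longleftrightarrow> algebra C T A \<and> algebra C T B \<and> f \<in> Arr C \<and>
    Dom C f = fst A \<and> Cod C f = fst B \<and> f \<cdot> snd A = snd B \<cdot> tm f"
  by (auto simp: alg_hom_def in_hom_iff)

lemma alg_hom_id: "algebra C T A \<Longrightarrow> alg_hom C T A A (i (fst A))"
  by (simp add: alg_hom_iff algebraD)

lemma alg_hom_comp:
  assumes f: "alg_hom C T A B f" and g: "alg_hom C T B D g"
  shows "alg_hom C T A D (g \<cdot> f)"
proof -
  note F = f[unfolded alg_hom_iff] and G = g[unfolded alg_hom_iff]
  have g_act: "g \<cdot> snd B = snd D \<cdot> tm g"
    using G by simp
  have "(g \<cdot> f) \<cdot> snd A = snd D \<cdot> tm (g \<cdot> f)"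
    using F G algebraD[of A] algebraD[of B] algebraD[of D] by (simp add: comp_reassoc[OF g_act] tm_comp)
  then show ?thesis
    using F G algebraD[of A] algebraD[of D] by (simp add: alg_hom_iff)
qed

lemma category_EM: "category (EM C T)"
  unfolding category_def
proof (intro conjI ballI impI)
  fix p assume "p \<in> Arr (EM C T)"
  then show "Dom (EM C T) p \<in> Obj (EM C T)" "Cod (EM C T) p \<in> Obj (EM C T)"
    by (simp_all add: alg_hom_iff)
next
  fix A assume "A \<in> Obj (EM C T)"
  then show "Idt (EM C T) A \<in> hom (EM C T) A A"
    by (simp add: in_hom_iff alg_hom_id)
next
  fix p q assume "p \<in> Arr (EM C T)" "q \<in> Arr (EM C T)" "Cod (EM C T) p = Dom (EM C T) q"
  then show "Cmp (EM C T) q p \<in> hom (EM C T) (Dom (EM C T) p) (Cod (EM C T) q)"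
    by (simp add: in_hom_iff) (metis alg_hom_comp)
next
  fix p assume "p \<in> Arr (EM C T)"
  then show "Cmp (EM C T) p (Idt (EM C T) (Dom (EM C T) p)) = p"
    and "Cmp (EM C T) (Idt (EM C T) (Cod (EM C T) p)) p = p"
    by (simp_all add: alg_hom_iff prod_eq_iff)
next
  fix p q r assume "p \<in> Arr (EM C T)" "q \<in> Arr (EM C T)" "r \<in> Arr (EM C T)"
    "Cod (EM C T) p = Dom (EM C T) q" "Cod (EM C T) q = Dom (EM C T) r"
  then show "Cmp (EM C T) r (Cmp (EM C T) q p) = Cmp (EM C T) (Cmp (EM C T) r q) p"
    by (simp add: alg_hom_iff)
qed

lemma alg_hom_cinv:
  assumes h: "alg_hom C T A B f" and fi: "iso C f"
  shows "alg_hom C T B A (cinv C f)"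
proof -
  note H = h[unfolded alg_hom_iff] and a = algebraD[of A] and b = algebraD[of B]
  let ?g = "cinv C f"
  have g1: "?g \<cdot> f = i (fst A)" "f \<cdot> ?g = i (fst B)"
    using cinv_comp_left[OF fi] cinv_comp_right[OF fi] H by simp_all
  have ga: "?g \<in> Arr C" "Dom C ?g = fst B" "Cod C ?g = fst A"
    using fi H by simp_all
  have tt: "tm f \<cdot> tm ?g = i (t (fst B))"
    using H ga a b g1 by (simp add: tm_comp[symmetric])
  have f_act: "f \<cdot> snd A = snd B \<cdot> tm f"
    using H by simp
  have "?g \<cdot> snd B = ?g \<cdot> (snd B \<cdot> (tm f \<cdot> tm ?g))"
    using ga H a b tt by simp
  also have "\<dots> = ?g \<cdot> (f \<cdot> (snd A \<cdot> tm ?g))"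
    using ga H a b tt by (simp add: comp_reassoc[OF f_act])
  also have "\<dots> = (?g \<cdot> f) \<cdot> (snd A \<cdot> tm ?g)"
    using ga H a b by simp
  also have "\<dots> = snd A \<cdot> tm ?g"
    using ga H a b by (simp add: g1)
  finally show ?thesis
    using ga H a b by (simp add: alg_hom_iff)
qed

lemma iso_EM:
  assumes p: "p \<in> Arr (EM C T)" and iso: "iso C (snd (snd p))"
  shows "iso (EM C T) p \<and> cinv (EM C T) p = (fst (snd p), fst p, cinv C (snd (snd p)))"
proof -
  obtain A B f where pe: "p = (A, B, f)"
    by (cases p) auto
  have h: "alg_hom C T A B f" and fi: "iso C f"
    using p iso pe by simp_all
  interpret EM: categorical "EM C T"
    by unfold_locales (rule category_EM)
  have inv: "inverse_arr (EM C T) p (B, A, cinv C f)"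
    unfolding inverse_arr_def using h alg_hom_cinv[OF h fi] cinv_comp_left[OF fi] cinv_comp_right[OF fi] pe
    by (simp add: in_hom_iff alg_hom_iff)
  then have "iso (EM C T) p"
    unfolding iso_def by blast
  then show ?thesis
    using EM.cinv_eq[OF inv] pe by simp
qed

end

locale monoidal_cat =
  fixes C :: "('o,'m) cat" and M :: "('o,'m) mon"
  assumes monoidal: "monoidal C M"
begin

sublocale categorical C
  using monoidal unfolding monoidal_def by unfold_locales blast

abbreviation ten (infixr "\<otimes>" 60) where "x \<otimes> y \<equiv> Ten M x y"
abbreviation tenm (infixr "\<odot>" 60) where "f \<odot> g \<equiv> TenM M f g"
abbreviation I where "I \<equiv> MUnit M"

lemma bifunctor: "bifunctor C (Ten M) (TenM M)"
  using monoidal unfolding monoidal_def by blast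

lemma ten_obj[simp]: "x \<in> Obj C \<Longrightarrow> y \<in> Obj C \<Longrightarrow> x \<otimes> y \<in> Obj C"
  and tenm_id[simp]: "x \<in> Obj C \<Longrightarrow> y \<in> Obj C \<Longrightarrow> i x \<odot> i y = i (x \<otimes> y)"
  using bifunctor unfolding bifunctor_def by blast+

lemma tenm_arr[simp]: "f \<in> Arr C \<Longrightarrow> g \<in> Arr C \<Longrightarrow> f \<odot> g \<in> Arr C"
  and tenm_dom[simp]: "f \<in> Arr C \<Longrightarrow> g \<in> Arr C \<Longrightarrow> Dom C (f \<odot> g) = Dom C f \<otimes> Dom C g"
  and tenm_cod[simp]: "f \<in> Arr C \<Longrightarrow> g \<in> Arr C \<Longrightarrow> Cod C (f \<odot> g) = Cod C f \<otimes> Cod C g"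
  using bifunctor unfolding bifunctor_def in_hom_iff by blast+

lemma tenm_comp: "f \<in> Arr C \<Longrightarrow> f' \<in> Arr C \<Longrightarrow> g \<in> Arr C \<Longrightarrow> g' \<in> Arr C \<Longrightarrow>
    Cod C f = Dom C f' \<Longrightarrow> Cod C g = Dom C g' \<Longrightarrow> (f' \<cdot> f) \<odot> (g' \<cdot> g) = (f' \<odot> g') \<cdot> (f \<odot> g)"
  using bifunctor unfolding bifunctor_def by blast

lemma tenm_comp_assoc: "f \<in> Arr C \<Longrightarrow> f' \<in> Arr C \<Longrightarrow> g \<in> Arr C \<Longrightarrow> g' \<in> Arr C \<Longrightarrow>
    Cod C f = Dom C f' \<Longrightarrow> Cod C g = Dom C g' \<Longrightarrow> r \<in> Arr C \<Longrightarrow> Cod C r = Dom C f \<otimes> Dom C g \<Longrightarrow>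
    (f' \<odot> g') \<cdot> ((f \<odot> g) \<cdot> r) = ((f' \<cdot> f) \<odot> (g' \<cdot> g)) \<cdot> r"
  by (simp add: tenm_comp)

lemma unit_obj[simp]: "I \<in> Obj C"
  using monoidal unfolding monoidal_def by blast

lemma asc_arr[simp]: "x \<in> Obj C \<Longrightarrow> y \<in> Obj C \<Longrightarrow> z \<in> Obj C \<Longrightarrow> Asc M x y z \<in> Arr C"
  and asc_dom[simp]: "x \<in> Obj C \<Longrightarrow> y \<in> Obj C \<Longrightarrow> z \<in> Obj C \<Longrightarrow> Dom C (Asc M x y z) = (x \<otimes> y) \<otimes> z"
  and asc_cod[simp]: "x \<in> Obj C \<Longrightarrow> y \<in> Obj C \<Longrightarrow> z \<in> Obj C \<Longrightarrow> Cod C (Asc M x y z) = x \<otimes> (y \<otimes> z)"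
  and asc_iso: "x \<in> Obj C \<Longrightarrow> y \<in> Obj C \<Longrightarrow> z \<in> Obj C \<Longrightarrow> iso C (Asc M x y z)"
  using monoidal unfolding monoidal_def in_hom_iff by blast+

lemma lu_arr[simp]: "x \<in> Obj C \<Longrightarrow> Lu M x \<in> Arr C"
  and lu_dom[simp]: "x \<in> Obj C \<Longrightarrow> Dom C (Lu M x) = I \<otimes> x"
  and lu_cod[simp]: "x \<in> Obj C \<Longrightarrow> Cod C (Lu M x) = x"
  and lu_iso: "x \<in> Obj C \<Longrightarrow> iso C (Lu M x)"
  and ru_arr[simp]: "x \<in> Obj C \<Longrightarrow> Ru M x \<in> Arr C"
  and ru_dom[simp]: "x \<in> Obj C \<Longrightarrow> Dom C (Ru M x) = x \<otimes> I"
  and ru_cod[simp]: "x \<in> Obj C \<Longrightarrow> Cod C (Ru M x) = x"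
  and ru_iso: "x \<in> Obj C \<Longrightarrow> iso C (Ru M x)"
  using monoidal unfolding monoidal_def in_hom_iff by blast+

lemma asc_nat: "f \<in> Arr C \<Longrightarrow> g \<in> Arr C \<Longrightarrow> h \<in> Arr C \<Longrightarrow> Cod C f = x \<Longrightarrow> Cod C g = y \<Longrightarrow> Cod C h = z \<Longrightarrow>
    Asc M x y z \<cdot> ((f \<odot> g) \<odot> h) = (f \<odot> (g \<odot> h)) \<cdot> Asc M (Dom C f) (Dom C g) (Dom C h)"
  using monoidal unfolding monoidal_def by blast

lemma lu_nat: "f \<in> Arr C \<Longrightarrow> Dom C f = x \<Longrightarrow> f \<cdot> Lu M x = Lu M (Cod C f) \<cdot> (i I \<odot> f)"
  and ru_nat: "f \<in> Arr C \<Longrightarrow> Dom C f = x \<Longrightarrow> f \<cdot> Ru M x = Ru M (Cod C f) \<cdot> (f \<odot> i I)"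
  using monoidal unfolding monoidal_def by metis+

lemma pentagon: "w \<in> Obj C \<Longrightarrow> x \<in> Obj C \<Longrightarrow> y \<in> Obj C \<Longrightarrow> z \<in> Obj C \<Longrightarrow>
    Asc M w x (y \<otimes> z) \<cdot> Asc M (w \<otimes> x) y z
    = (i w \<odot> Asc M x y z) \<cdot> (Asc M w (x \<otimes> y) z \<cdot> (Asc M w x y \<odot> i z))"
  using monoidal unfolding monoidal_def by blast

lemma triangle: "x \<in> Obj C \<Longrightarrow> y \<in> Obj C \<Longrightarrow> (i x \<odot> Lu M y) \<cdot> Asc M x I y = Ru M x \<odot> i y"
  using monoidal unfolding monoidal_def by blast

end

lemma lift_mon_simps[simp]:
  "Ten (lift_mon C M T2 T0) = lift_ten C M T2"
  "TenM (lift_mon C M T2 T0) p q = (lift_ten C M T2 (fst p) (fst q),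
     lift_ten C M T2 (fst (snd p)) (fst (snd q)), TenM M (snd (snd p)) (snd (snd q)))"
  "MUnit (lift_mon C M T2 T0) = (MUnit M, T0)"
  "Asc (lift_mon C M T2 T0) A B D = (lift_ten C M T2 (lift_ten C M T2 A B) D,
     lift_ten C M T2 A (lift_ten C M T2 B D), Asc M (fst A) (fst B) (fst D))"
  "Lu (lift_mon C M T2 T0) A = (lift_ten C M T2 (MUnit M, T0) A, A, Lu M (fst A))"
  "Ru (lift_mon C M T2 T0) A = (lift_ten C M T2 A (MUnit M, T0), A, Ru M (fst A))"
  by (simp_all add: lift_mon_def Let_def)

lemma lift_ten_simps[simp]:
  "fst (lift_ten C M T2 A B) = Ten M (fst A) (fst B)"
  "snd (lift_ten C M T2 A B) = Cmp C (TenM M (snd A) (snd B)) (T2 (fst A) (fst B))"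
  by (simp_all add: lift_ten_def)

locale bimonad_on =
  fixes C :: "('o,'m) cat" and M :: "('o,'m) mon" and T :: "('o,'m) monad"
    and T2 :: "'o \<Rightarrow> 'o \<Rightarrow> 'm" and T0 :: 'm
  assumes bimonad: "bimonad C M T T2 T0"
begin

sublocale monoidal_cat C M
  using bimonad unfolding bimonad_def Let_def by unfold_locales blast

sublocale monadic C T
  using bimonad unfolding bimonad_def Let_def by unfold_locales blast

lemma T2_arr[simp]: "x \<in> Obj C \<Longrightarrow> y \<in> Obj C \<Longrightarrow> T2 x y \<in> Arr C"
  and T2_dom[simp]: "x \<in> Obj C \<Longrightarrow> y \<in> Obj C \<Longrightarrow> Dom C (T2 x y) = t (x \<otimes> y)"
  and T2_cod[simp]: "x \<in> Obj C \<Longrightarrow> y \<in> Obj C \<Longrightarrow> Cod C (T2 x y) = t x \<otimes> t y"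
  and T0_arr[simp]: "T0 \<in> Arr C"
  and T0_dom[simp]: "Dom C T0 = t I"
  and T0_cod[simp]: "Cod C T0 = I"
  using bimonad unfolding bimonad_def Let_def in_hom_iff by blast+

lemma T2_nat: "f \<in> Arr C \<Longrightarrow> g \<in> Arr C \<Longrightarrow> Cod C f = x \<Longrightarrow> Cod C g = y \<Longrightarrow>
    T2 x y \<cdot> tm (f \<odot> g) = (tm f \<odot> tm g) \<cdot> T2 (Dom C f) (Dom C g)"
  using bimonad unfolding bimonad_def Let_def by blast

lemma T2_nat_assoc: "f \<in> Arr C \<Longrightarrow> g \<in> Arr C \<Longrightarrow> Cod C f = x \<Longrightarrow> Cod C g = y \<Longrightarrow>
    r \<in> Arr C \<Longrightarrow> Cod C r = t (Dom C f \<otimes> Dom C g) \<Longrightarrow>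
    T2 x y \<cdot> (tm (f \<odot> g) \<cdot> r) = (tm f \<odot> tm g) \<cdot> (T2 (Dom C f) (Dom C g) \<cdot> r)"
  by (rule comp_reassoc[OF T2_nat]) auto

lemma T2_asc: "x \<in> Obj C \<Longrightarrow> y \<in> Obj C \<Longrightarrow> z \<in> Obj C \<Longrightarrow>
    Asc M (t x) (t y) (t z) \<cdot> ((T2 x y \<odot> i (t z)) \<cdot> T2 (x \<otimes> y) z)
    = (i (t x) \<odot> T2 y z) \<cdot> (T2 x (y \<otimes> z) \<cdot> tm (Asc M x y z))"
  and T2_lu: "x \<in> Obj C \<Longrightarrow> Lu M (t x) \<cdot> ((T0 \<odot> i (t x)) \<cdot> T2 I x) = tm (Lu M x)"
  and T2_ru: "x \<in> Obj C \<Longrightarrow> Ru M (t x) \<cdot> ((i (t x) \<odot> T0) \<cdot> T2 x I) = tm (Ru M x)"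
  and T2_mu: "x \<in> Obj C \<Longrightarrow> y \<in> Obj C \<Longrightarrow>
    T2 x y \<cdot> mu (x \<otimes> y) = (mu x \<odot> mu y) \<cdot> (T2 (t x) (t y) \<cdot> tm (T2 x y))"
  and T0_mu: "T0 \<cdot> mu I = T0 \<cdot> tm T0"
  and T2_eta: "x \<in> Obj C \<Longrightarrow> y \<in> Obj C \<Longrightarrow> T2 x y \<cdot> eta (x \<otimes> y) = eta x \<odot> eta y"
  and T0_eta: "T0 \<cdot> eta I = i I"
  using bimonad unfolding bimonad_def Let_def by blast+

lemma tensor_action_T2:
  assumes "algebra C T (x, ch)" and "algebra C T (a, al)"
  shows "(ch \<odot> al) \<cdot> (T2 x a \<cdot> tm (ch \<odot> al)) = (ch \<odot> al) \<cdot> ((mu x \<odot> mu a) \<cdot> T2 (t x) (t a))"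
  using assms by (simp add: algebra_iff T2_nat tenm_comp_assoc)

lemma algebra_lift_ten:
  assumes A: "algebra C T A" and B: "algebra C T B"
  shows "algebra C T (lift_ten C M T2 A B)"
proof -
  obtain a al b be where AB: "A = (a, al)" "B = (b, be)"
    by (cases A, cases B)
  have a: "algebra C T (a, al)" and b: "algebra C T (b, be)"
    using A B AB by simp_all
  note ab = a[unfolded algebra_iff] b[unfolded algebra_iff]
  let ?act = "(al \<odot> be) \<cdot> T2 a b"
  have unit: "?act \<cdot> eta (a \<otimes> b) = i (a \<otimes> b)"
    using ab by (simp add: T2_eta tenm_comp[symmetric])
  have "?act \<cdot> tm ?act = ((al \<odot> be) \<cdot> (T2 a b \<cdot> tm (al \<odot> be))) \<cdot> tm (T2 a b)"
    using ab by (simp add: tm_comp)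
  also have "\<dots> = ((al \<odot> be) \<cdot> ((mu a \<odot> mu b) \<cdot> T2 (t a) (t b))) \<cdot> tm (T2 a b)"
    by (simp only: tensor_action_T2[OF a b])
  also have "\<dots> = ?act \<cdot> mu (a \<otimes> b)"
    using ab by (simp add: T2_mu)
  finally show ?thesis
    using ab unit AB by (simp add: algebra_iff lift_ten_def)
qed

lemma algebra_unit: "algebra C T (I, T0)"
  by (simp add: algebra_iff T0_eta T0_mu)

lemma alg_hom_tenm:
  assumes f: "alg_hom C T A A' f" and g: "alg_hom C T B B' g"
  shows "alg_hom C T (lift_ten C M T2 A B) (lift_ten C M T2 A' B') (f \<odot> g)"
proof -
  note F = f[unfolded alg_hom_iff] and G = g[unfolded alg_hom_iff]
  note algs = algebraD[of A] algebraD[of B] algebraD[of A'] algebraD[of B']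
  have "(f \<odot> g) \<cdot> ((snd A \<odot> snd B) \<cdot> T2 (fst A) (fst B)) =
        ((snd A' \<odot> snd B') \<cdot> T2 (fst A') (fst B')) \<cdot> tm (f \<odot> g)"
    using F G algs by (simp add: tenm_comp[symmetric] tenm_comp_assoc T2_nat)
  then show ?thesis
    using F G algs by (simp add: alg_hom_iff algebra_lift_ten)
qed

lemma alg_hom_asc:
  assumes A: "algebra C T A" and B: "algebra C T B" and D: "algebra C T D"
  shows "alg_hom C T (lift_ten C M T2 (lift_ten C M T2 A B) D) (lift_ten C M T2 A (lift_ten C M T2 B D))
     (Asc M (fst A) (fst B) (fst D))"
proof -
  obtain a al b be d de where ABD: "A = (a, al)" "B = (b, be)" "D = (d, de)"
    by (cases A, cases B, cases D)
  have x: "a \<in> Obj C" "al \<in> Arr C" "Dom C al = t a" "Cod C al = a"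
          "b \<in> Obj C" "be \<in> Arr C" "Dom C be = t b" "Cod C be = b"
          "d \<in> Obj C" "de \<in> Arr C" "Dom C de = t d" "Cod C de = d"
    using A B D ABD by (simp_all add: algebra_iff)
  have "Asc M a b d \<cdot> ((((al \<odot> be) \<cdot> T2 a b) \<odot> de) \<cdot> T2 (a \<otimes> b) d)
      = (Asc M a b d \<cdot> ((al \<odot> be) \<odot> de)) \<cdot> ((T2 a b \<odot> i (t d)) \<cdot> T2 (a \<otimes> b) d)"
    using x by (simp add: tenm_comp[symmetric] tenm_comp_assoc)
  also have "\<dots> = (al \<odot> (be \<odot> de)) \<cdot> (Asc M (t a) (t b) (t d) \<cdot> ((T2 a b \<odot> i (t d)) \<cdot> T2 (a \<otimes> b) d))"
    using x by (simp add: asc_nat)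
  also have "\<dots> = (al \<odot> (be \<odot> de)) \<cdot> ((i (t a) \<odot> T2 b d) \<cdot> (T2 a (b \<otimes> d) \<cdot> tm (Asc M a b d)))"
    using x by (simp add: T2_asc)
  also have "\<dots> = ((al \<odot> ((be \<odot> de) \<cdot> T2 b d)) \<cdot> T2 a (b \<otimes> d)) \<cdot> tm (Asc M a b d)"
    using x by (simp add: tenm_comp[symmetric] tenm_comp_assoc)
  finally show ?thesis
    using x A B D ABD by (simp add: alg_hom_iff algebra_lift_ten)
qed

lemma alg_hom_lu:
  assumes A: "algebra C T A"
  shows "alg_hom C T (lift_ten C M T2 (I, T0) A) A (Lu M (fst A))"
proof -
  obtain a al where Ae: "A = (a, al)"
    by (cases A)
  have x: "a \<in> Obj C" "al \<in> Arr C" "Dom C al = t a" "Cod C al = a"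
    using A Ae by (simp_all add: algebra_iff)
  have "al \<cdot> tm (Lu M a) = (al \<cdot> Lu M (t a)) \<cdot> ((T0 \<odot> i (t a)) \<cdot> T2 I a)"
    using x by (simp add: T2_lu[symmetric])
  also have "\<dots> = (Lu M a \<cdot> (i I \<odot> al)) \<cdot> ((T0 \<odot> i (t a)) \<cdot> T2 I a)"
    using x by (simp add: lu_nat)
  also have "\<dots> = Lu M a \<cdot> ((T0 \<odot> al) \<cdot> T2 I a)"
    using x by (simp add: tenm_comp_assoc)
  finally show ?thesis
    using x A Ae algebra_unit by (simp add: alg_hom_iff algebra_lift_ten)
qed

lemma alg_hom_ru:
  assumes A: "algebra C T A"
  shows "alg_hom C T (lift_ten C M T2 A (I, T0)) A (Ru M (fst A))"
proof -
  obtain a al where Ae: "A = (a, al)"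
    by (cases A)
  have x: "a \<in> Obj C" "al \<in> Arr C" "Dom C al = t a" "Cod C al = a"
    using A Ae by (simp_all add: algebra_iff)
  have "al \<cdot> tm (Ru M a) = (al \<cdot> Ru M (t a)) \<cdot> ((i (t a) \<odot> T0) \<cdot> T2 a I)"
    using x by (simp add: T2_ru[symmetric])
  also have "\<dots> = (Ru M a \<cdot> (al \<odot> i I)) \<cdot> ((i (t a) \<odot> T0) \<cdot> T2 a I)"
    using x by (simp add: ru_nat)
  also have "\<dots> = Ru M a \<cdot> ((al \<odot> T0) \<cdot> T2 a I)"
    using x by (simp add: tenm_comp_assoc)
  finally show ?thesis
    using x A Ae algebra_unit by (simp add: alg_hom_iff algebra_lift_ten)
qed

abbreviation "L \<equiv> lift_mon C M T2 T0"

lemma bifunctor_EM: "bifunctor (EM C T) (Ten L) (TenM L)"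
  unfolding bifunctor_def
proof (intro conjI ballI impI)
  fix A B assume "A \<in> Obj (EM C T)" "B \<in> Obj (EM C T)"
  then show "Ten L A B \<in> Obj (EM C T)"
    and "TenM L (Idt (EM C T) A) (Idt (EM C T) B) = Idt (EM C T) (Ten L A B)"
    by (simp_all add: algebra_lift_ten algebraD)
next
  fix p q assume "p \<in> Arr (EM C T)" "q \<in> Arr (EM C T)"
  then show "TenM L p q \<in> hom (EM C T) (Ten L (Dom (EM C T) p) (Dom (EM C T) q)) (Ten L (Cod (EM C T) p) (Cod (EM C T) q))"
    by (simp add: in_hom_iff alg_hom_tenm)
next
  fix f f' g g' assume "f \<in> Arr (EM C T)" "f' \<in> Arr (EM C T)" "g \<in> Arr (EM C T)" "g' \<in> Arr (EM C T)"
    "Cod (EM C T) f = Dom (EM C T) f'" "Cod (EM C T) g = Dom (EM C T) g'"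
  then show "TenM L (Cmp (EM C T) f' f) (Cmp (EM C T) g' g) = Cmp (EM C T) (TenM L f' g') (TenM L f g)"
    by (simp add: alg_hom_iff tenm_comp)
qed

lemma monoidal_EM: "monoidal (EM C T) L"
  unfolding monoidal_def
proof (intro conjI ballI)
  show "category (EM C T)" by (rule category_EM)
  show "bifunctor (EM C T) (Ten L) (TenM L)" by (rule bifunctor_EM)
  show "MUnit L \<in> Obj (EM C T)" by (simp add: algebra_unit)
next
  fix A B D assume "A \<in> Obj (EM C T)" "B \<in> Obj (EM C T)" "D \<in> Obj (EM C T)"
  then have h: "algebra C T A" "algebra C T B" "algebra C T D"
    by simp_all
  show "Asc L A B D \<in> hom (EM C T) (Ten L (Ten L A B) D) (Ten L A (Ten L B D))"
    using h by (simp add: in_hom_iff alg_hom_asc)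
  show "iso (EM C T) (Asc L A B D)"
    using iso_EM[of "Asc L A B D"] h algebraD[OF h(1)] algebraD[OF h(2)] algebraD[OF h(3)]
    by (simp add: alg_hom_asc asc_iso)
next
  fix A assume "A \<in> Obj (EM C T)"
  then have h: "algebra C T A"
    by simp
  show "Lu L A \<in> hom (EM C T) (Ten L (MUnit L) A) A"
    using h by (simp add: in_hom_iff alg_hom_lu)
  show "iso (EM C T) (Lu L A)"
    using iso_EM[of "Lu L A"] h algebraD[OF h] by (simp add: alg_hom_lu lu_iso)
  show "Ru L A \<in> hom (EM C T) (Ten L A (MUnit L)) A"
    using h by (simp add: in_hom_iff alg_hom_ru)
  show "iso (EM C T) (Ru L A)"
    using iso_EM[of "Ru L A"] h algebraD[OF h] by (simp add: alg_hom_ru ru_iso)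
qed (simp_all add: alg_hom_iff algebraD asc_nat lu_nat ru_nat pentagon triangle)

lemma cinv_Lu_EM: "algebra C T A \<Longrightarrow> fst A = a \<Longrightarrow>
    cinv (EM C T) (lift_ten C M T2 (I, T0) A, A, Lu M a) = (A, lift_ten C M T2 (I, T0) A, cinv C (Lu M a))"
  using iso_EM[of "Lu L A"] alg_hom_lu[of A] lu_iso algebraD[of A] by simp

lemma cinv_Ru_EM: "algebra C T A \<Longrightarrow> fst A = a \<Longrightarrow>
    cinv (EM C T) (lift_ten C M T2 A (I, T0), A, Ru M a) = (A, lift_ten C M T2 A (I, T0), cinv C (Ru M a))"
  using iso_EM[of "Ru L A"] alg_hom_ru[of A] ru_iso algebraD[of A] by simp

end

locale rmatrix_on =
  fixes D :: "('o,'m) cat" and M1 M2 :: "('o,'m) mon" and T :: "('o,'m) monad"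
    and T2c :: "'o \<Rightarrow> 'o \<Rightarrow> 'm" and T0c :: 'm and T2b :: "'o \<Rightarrow> 'o \<Rightarrow> 'm" and T0b :: 'm
    and R :: "'o \<Rightarrow> 'o \<Rightarrow> 'o \<Rightarrow> 'o \<Rightarrow> 'm" and nu varpi iota :: 'm
  assumes sep_opmonoidal: "sep_opmonoidal_monad D M1 M2 T T2c T0c T2b T0b"
    and rmatrix: "rmatrix D M1 M2 T T2c T0c T2b T0b R nu varpi iota"
begin

sublocale b1: bimonad_on D M1 T T2c T0c
  using sep_opmonoidal unfolding sep_opmonoidal_monad_def by unfold_locales blast

sublocale b2: bimonad_on D M2 T T2b T0b
  using sep_opmonoidal unfolding sep_opmonoidal_monad_def by unfold_locales blast

abbreviation comp (infixr "\<cdot>" 55) where "g \<cdot> f \<equiv> Cmp D g f"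
abbreviation i where "i \<equiv> Idt D"
abbreviation t where "t \<equiv> TO T"
abbreviation tm where "tm \<equiv> TM T"
abbreviation mu where "mu \<equiv> Mu T"
abbreviation ten1 (infixr "\<otimes>" 60) where "x \<otimes> y \<equiv> Ten M1 x y"
abbreviation tenm1 (infixr "\<odot>" 60) where "f \<odot> g \<equiv> TenM M1 f g"
abbreviation ten2 (infixr "\<oplus>" 61) where "x \<oplus> y \<equiv> Ten M2 x y"
abbreviation tenm2 (infixr "\<boxplus>" 61) where "f \<boxplus> g \<equiv> TenM M2 f g"
abbreviation "L1 \<equiv> lift_mon D M1 T2c T0c"
abbreviation "L2 \<equiv> lift_mon D M2 T2b T0b"
abbreviation "XI \<equiv> xi D M1 M2 T2c T0c T2b T0b R"

lemma R_hom: "a \<in> Obj D \<Longrightarrow> b \<in> Obj D \<Longrightarrow> c \<in> Obj D \<Longrightarrow> d \<in> Obj D \<Longrightarrow>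
    R a b c d \<in> hom D ((a \<oplus> b) \<otimes> (c \<oplus> d)) ((t a \<otimes> t c) \<oplus> (t b \<otimes> t d))"
  using rmatrix unfolding rmatrix_def Let_def by (elim conjE) blast

lemma R_arr[simp]: "a \<in> Obj D \<Longrightarrow> b \<in> Obj D \<Longrightarrow> c \<in> Obj D \<Longrightarrow> d \<in> Obj D \<Longrightarrow> R a b c d \<in> Arr D"
  and R_dom[simp]: "a \<in> Obj D \<Longrightarrow> b \<in> Obj D \<Longrightarrow> c \<in> Obj D \<Longrightarrow> d \<in> Obj D \<Longrightarrow>
    Dom D (R a b c d) = (a \<oplus> b) \<otimes> (c \<oplus> d)"
  and R_cod[simp]: "a \<in> Obj D \<Longrightarrow> b \<in> Obj D \<Longrightarrow> c \<in> Obj D \<Longrightarrow> d \<in> Obj D \<Longrightarrow>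
    Cod D (R a b c d) = (t a \<otimes> t c) \<oplus> (t b \<otimes> t d)"
  using R_hom unfolding in_hom_iff by blast+

lemma R_nat: "f \<in> Arr D \<Longrightarrow> g \<in> Arr D \<Longrightarrow> h \<in> Arr D \<Longrightarrow> k \<in> Arr D \<Longrightarrow>
    Cod D f = a \<Longrightarrow> Cod D g = b \<Longrightarrow> Cod D h = c \<Longrightarrow> Cod D k = d \<Longrightarrow>
    R a b c d \<cdot> ((f \<boxplus> g) \<odot> (h \<boxplus> k))
    = ((tm f \<odot> tm h) \<boxplus> (tm g \<odot> tm k)) \<cdot> R (Dom D f) (Dom D g) (Dom D h) (Dom D k)"
  using rmatrix unfolding rmatrix_def Let_def by (elim conjE) blast

lemma comonoid_nu:
  "comonoid_obj (EM D T) L2 (MUnit L1) (MUnit L1, Ten L2 (MUnit L1) (MUnit L1), nu) (MUnit L1, MUnit L2, iota)"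
  using rmatrix unfolding rmatrix_def Let_def by (elim conjE)

lemma monoid_varpi:
  "monoid_obj (EM D T) L1 (MUnit L2) (Ten L1 (MUnit L2) (MUnit L2), MUnit L2, varpi) (MUnit L1, MUnit L2, iota)"
  using rmatrix unfolding rmatrix_def Let_def by (elim conjE)

lemma nu_arr[simp]: "nu \<in> Arr D" and nu_dom[simp]: "Dom D nu = MUnit M1"
  and nu_cod[simp]: "Cod D nu = MUnit M1 \<oplus> MUnit M1"
  using comonoid_nu unfolding comonoid_obj_def in_hom_iff by (simp_all add: b1.alg_hom_iff)

lemma varpi_arr[simp]: "varpi \<in> Arr D" and varpi_dom[simp]: "Dom D varpi = MUnit M2 \<otimes> MUnit M2"
  and varpi_cod[simp]: "Cod D varpi = MUnit M2"
  using monoid_varpi unfolding monoid_obj_def in_hom_iff by (simp_all add: b1.alg_hom_iff)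

lemma R_lift: "a \<in> Obj D \<Longrightarrow> b \<in> Obj D \<Longrightarrow> c \<in> Obj D \<Longrightarrow> d \<in> Obj D \<Longrightarrow>
    ((mu a \<odot> mu c) \<boxplus> (mu b \<odot> mu d)) \<cdot> (R (t a) (t b) (t c) (t d) \<cdot> ((T2b a b \<odot> T2b c d) \<cdot> T2c (a \<oplus> b) (c \<oplus> d)))
    = ((mu a \<odot> mu c) \<boxplus> (mu b \<odot> mu d)) \<cdot> ((T2c (t a) (t c) \<boxplus> T2c (t b) (t d)) \<cdot>
        (T2b (t a \<otimes> t c) (t b \<otimes> t d) \<cdot> tm (R a b c d)))"
  using rmatrix unfolding rmatrix_def Let_def by (elim conjE) blast

lemma xi_unfold: "XI A B A' B' = (Ten L1 (Ten L2 A B) (Ten L2 A' B'), Ten L2 (Ten L1 A A') (Ten L1 B B'),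
    ((snd A \<odot> snd A') \<boxplus> (snd B \<odot> snd B')) \<cdot> R (fst A) (fst B) (fst A') (fst B'))"
  by (simp add: xi_def Let_def)

lemmas tenm_merge = b1.tenm_comp[symmetric] b1.tenm_comp_assoc b2.tenm_comp[symmetric] b2.tenm_comp_assoc

lemma xi_alg_hom:
  assumes A: "algebra D T (a, al)" and B: "algebra D T (b, be)"
    and C: "algebra D T (c, ga)" and DD: "algebra D T (d, de)"
  shows "alg_hom D T
    (lift_ten D M1 T2c (lift_ten D M2 T2b (a, al) (b, be)) (lift_ten D M2 T2b (c, ga) (d, de)))
    (lift_ten D M2 T2b (lift_ten D M1 T2c (a, al) (c, ga)) (lift_ten D M1 T2c (b, be) (d, de)))
    (((al \<odot> ga) \<boxplus> (be \<odot> de)) \<cdot> R a b c d)"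
proof -
  note x = A[unfolded b1.algebra_iff] B[unfolded b1.algebra_iff] C[unfolded b1.algebra_iff] DD[unfolded b1.algebra_iff]
  let ?X = "(al \<odot> ga) \<boxplus> (be \<odot> de)"
  let ?T2 = "(T2b a b \<odot> T2b c d) \<cdot> T2c (a \<oplus> b) (c \<oplus> d)"
  have "(?X \<cdot> R a b c d) \<cdot> ((((al \<boxplus> be) \<cdot> T2b a b) \<odot> ((ga \<boxplus> de) \<cdot> T2b c d)) \<cdot> T2c (a \<oplus> b) (c \<oplus> d))
     = ?X \<cdot> ((R a b c d \<cdot> ((al \<boxplus> be) \<odot> (ga \<boxplus> de))) \<cdot> ?T2)"
    using x by (simp add: tenm_merge)
  also have "\<dots> = ?X \<cdot> ((((tm al \<odot> tm ga) \<boxplus> (tm be \<odot> tm de)) \<cdot> R (t a) (t b) (t c) (t d)) \<cdot> ?T2)"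
    using x by (simp add: R_nat)
  also have "\<dots> = ?X \<cdot> (((mu a \<odot> mu c) \<boxplus> (mu b \<odot> mu d)) \<cdot> (R (t a) (t b) (t c) (t d) \<cdot> ?T2))"
    using x by (simp add: tenm_merge)
  also have "\<dots> = ?X \<cdot> (((mu a \<odot> mu c) \<boxplus> (mu b \<odot> mu d)) \<cdot> ((T2c (t a) (t c) \<boxplus> T2c (t b) (t d)) \<cdot>
      (T2b (t a \<otimes> t c) (t b \<otimes> t d) \<cdot> tm (R a b c d))))"
    using x by (simp add: R_lift)
  also have "\<dots> = (((al \<odot> ga) \<cdot> T2c a c) \<boxplus> ((be \<odot> de) \<cdot> T2c b d)) \<cdot>
      ((tm (al \<odot> ga) \<boxplus> tm (be \<odot> de)) \<cdot> (T2b (t a \<otimes> t c) (t b \<otimes> t d) \<cdot> tm (R a b c d)))"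
    using x by (simp add: tenm_merge b1.T2_nat)
  also have "\<dots> = ((((al \<odot> ga) \<cdot> T2c a c) \<boxplus> ((be \<odot> de) \<cdot> T2c b d)) \<cdot> T2b (a \<otimes> c) (b \<otimes> d)) \<cdot> tm (?X \<cdot> R a b c d)"
    using x by (simp add: b2.T2_nat_assoc b1.tm_comp)
  finally show ?thesis
    using x A B C DD by (simp add: b1.alg_hom_iff b1.algebra_lift_ten b2.algebra_lift_ten)
qed

lemma xi_hom_EM:
  "X \<in> Obj (EM D T) \<Longrightarrow> Y \<in> Obj (EM D T) \<Longrightarrow> A \<in> Obj (EM D T) \<Longrightarrow> B \<in> Obj (EM D T) \<Longrightarrow>
    XI X Y A B \<in> hom (EM D T) (Ten L1 (Ten L2 X Y) (Ten L2 A B)) (Ten L2 (Ten L1 X A) (Ten L1 Y B))"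
  by (cases X, cases Y, cases A, cases B) (simp add: in_hom_iff xi_unfold xi_alg_hom)

lemma R_action_nat:
  assumes "alg_hom D T A A' f" "alg_hom D T B B' g" "alg_hom D T C C' h" "alg_hom D T Q Q' k"
  shows "(((snd A' \<odot> snd C') \<boxplus> (snd B' \<odot> snd Q')) \<cdot> R (fst A') (fst B') (fst C') (fst Q')) \<cdot> ((f \<boxplus> g) \<odot> (h \<boxplus> k))
    = ((f \<odot> h) \<boxplus> (g \<odot> k)) \<cdot> (((snd A \<odot> snd C) \<boxplus> (snd B \<odot> snd Q)) \<cdot> R (fst A) (fst B) (fst C) (fst Q))"
  using assms b1.algebraD[of A] b1.algebraD[of A'] b1.algebraD[of B] b1.algebraD[of B']
    b1.algebraD[of C] b1.algebraD[of C'] b1.algebraD[of Q] b1.algebraD[of Q']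
  by (simp add: b1.alg_hom_iff R_nat tenm_merge)

lemma xi_nat_EM: "f \<in> Arr (EM D T) \<Longrightarrow> g \<in> Arr (EM D T) \<Longrightarrow> h \<in> Arr (EM D T) \<Longrightarrow> k \<in> Arr (EM D T) \<Longrightarrow>
    Cmp (EM D T) (XI (Cod (EM D T) f) (Cod (EM D T) g) (Cod (EM D T) h) (Cod (EM D T) k)) (TenM L1 (TenM L2 f g) (TenM L2 h k))
    = Cmp (EM D T) (TenM L2 (TenM L1 f h) (TenM L1 g k)) (XI (Dom (EM D T) f) (Dom (EM D T) g) (Dom (EM D T) h) (Dom (EM D T) k))"
  using R_action_nat[of "fst f" "fst (snd f)" "snd (snd f)" "fst g" "fst (snd g)" "snd (snd g)"
     "fst h" "fst (snd h)" "snd (snd h)" "fst k" "fst (snd k)" "snd (snd k)"]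
  by (simp add: xi_unfold)

abbreviation R1_lhs where
  "R1_lhs a b c d x y \<equiv> (Asc M1 (t a) (t c) (t x) \<boxplus> Asc M1 (t b) (t d) (t y)) \<cdot>
     (((mu a \<odot> mu c) \<odot> i (t x)) \<boxplus> ((mu b \<odot> mu d) \<odot> i (t y))) \<cdot>
     ((T2c (t a) (t c) \<odot> i (t x)) \<boxplus> (T2c (t b) (t d) \<odot> i (t y))) \<cdot>
     R (t a \<otimes> t c) (t b \<otimes> t d) x y \<cdot> (R a b c d \<odot> i (x \<oplus> y))"

abbreviation R1_rhs where
  "R1_rhs a b c d x y \<equiv> ((i (t a) \<odot> (mu c \<odot> mu x)) \<boxplus> (i (t b) \<odot> (mu d \<odot> mu y))) \<cdot>
     ((i (t a) \<odot> T2c (t c) (t x)) \<boxplus> (i (t b) \<odot> T2c (t d) (t y))) \<cdot>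
     R a b (t c \<otimes> t x) (t d \<otimes> t y) \<cdot> (i (a \<oplus> b) \<odot> R c d x y) \<cdot> Asc M1 (a \<oplus> b) (c \<oplus> d) (x \<oplus> y)"

lemma R_assoc1:
  assumes "a \<in> Obj D" "b \<in> Obj D" "c \<in> Obj D" "d \<in> Obj D" "x \<in> Obj D" "y \<in> Obj D"
  shows "R1_lhs a b c d x y = R1_rhs a b c d x y"
proof -
  have "\<forall>a\<in>Obj D. \<forall>b\<in>Obj D. \<forall>c\<in>Obj D. \<forall>d\<in>Obj D. \<forall>x\<in>Obj D. \<forall>y\<in>Obj D.
      R1_lhs a b c d x y = R1_rhs a b c d x y"
    using rmatrix unfolding rmatrix_def Let_def by (elim conjE)
  then show ?thesis
    using assms by blast
qed

lemma xi_A1_lhs_factor: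
  assumes X: "algebra D T (x, ch)" and Y: "algebra D T (y, ps)" and A: "algebra D T (a, al)"
    and B: "algebra D T (b, be)" and C: "algebra D T (c, ga)" and DD: "algebra D T (d, de)"
  shows "(Asc M1 x a c \<boxplus> Asc M1 y b d) \<cdot>
      (((((ch \<odot> al) \<cdot> T2c x a) \<odot> ga) \<boxplus> (((ps \<odot> be) \<cdot> T2c y b) \<odot> de)) \<cdot> R (x \<otimes> a) (y \<otimes> b) c d) \<cdot>
      ((((ch \<odot> al) \<boxplus> (ps \<odot> be)) \<cdot> R x y a b) \<odot> i (c \<oplus> d))
    = ((ch \<odot> (al \<odot> ga)) \<boxplus> (ps \<odot> (be \<odot> de))) \<cdot> R1_lhs x y a b c d"
proof -
  note h = X[unfolded b1.algebra_iff] Y[unfolded b1.algebra_iff] A[unfolded b1.algebra_iff]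
    B[unfolded b1.algebra_iff] C[unfolded b1.algebra_iff] DD[unfolded b1.algebra_iff]
  let ?As = "Asc M1 x a c \<boxplus> Asc M1 y b d"
  let ?F = "(ch \<odot> al) \<boxplus> (ps \<odot> be)"
  let ?G = "(((ch \<odot> al) \<cdot> T2c x a) \<odot> ga) \<boxplus> (((ps \<odot> be) \<cdot> T2c y b) \<odot> de)"
  let ?R = "R (t x \<otimes> t a) (t y \<otimes> t b) c d \<cdot> (R x y a b \<odot> i (c \<oplus> d))"
  let ?rest = "(((mu x \<odot> mu a) \<odot> i (t c)) \<boxplus> ((mu y \<odot> mu b) \<odot> i (t d))) \<cdot>
      ((T2c (t x) (t a) \<odot> i (t c)) \<boxplus> (T2c (t y) (t b) \<odot> i (t d))) \<cdot> ?R"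
  have "?As \<cdot> (?G \<cdot> R (x \<otimes> a) (y \<otimes> b) c d) \<cdot> ((?F \<cdot> R x y a b) \<odot> i (c \<oplus> d))
     = ?As \<cdot> ?G \<cdot> (R (x \<otimes> a) (y \<otimes> b) c d \<cdot> (?F \<odot> (i c \<boxplus> i d))) \<cdot> (R x y a b \<odot> i (c \<oplus> d))"
    using h by (simp add: tenm_merge)
  also have "\<dots> = ?As \<cdot> ?G \<cdot> (((tm (ch \<odot> al) \<odot> i (t c)) \<boxplus> (tm (ps \<odot> be) \<odot> i (t d))) \<cdot>
      R (t x \<otimes> t a) (t y \<otimes> t b) c d) \<cdot> (R x y a b \<odot> i (c \<oplus> d))"
    \<comment> \<open>\<open>i c \<boxplus> i d\<close> must not be collapsed to \<open>i (c \<oplus> d)\<close>, or \<open>R_nat\<close> no longer matches\<close>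
    using h by (simp del: b2.tenm_id add: R_nat)
  also have "\<dots> = ?As \<cdot> (((((ch \<odot> al) \<cdot> (T2c x a \<cdot> tm (ch \<odot> al))) \<odot> ga) \<boxplus>
      (((ps \<odot> be) \<cdot> (T2c y b \<cdot> tm (ps \<odot> be))) \<odot> de)) \<cdot> ?R)"
    using h by (simp add: tenm_merge)
  also have "\<dots> = ?As \<cdot> (((((ch \<odot> al) \<cdot> ((mu x \<odot> mu a) \<cdot> T2c (t x) (t a))) \<odot> ga) \<boxplus>
      (((ps \<odot> be) \<cdot> ((mu y \<odot> mu b) \<cdot> T2c (t y) (t b))) \<odot> de)) \<cdot> ?R)"
    by (simp only: b1.tensor_action_T2[OF X A] b1.tensor_action_T2[OF Y B])
  also have "\<dots> = (?As \<cdot> (((ch \<odot> al) \<odot> ga) \<boxplus> ((ps \<odot> be) \<odot> de))) \<cdot> ?rest"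
    using h by (simp add: tenm_merge)
  also have "\<dots> = (((ch \<odot> (al \<odot> ga)) \<boxplus> (ps \<odot> (be \<odot> de))) \<cdot>
      (Asc M1 (t x) (t a) (t c) \<boxplus> Asc M1 (t y) (t b) (t d))) \<cdot> ?rest"
    using h by (simp add: tenm_merge b1.asc_nat)
  finally show ?thesis
    using h by simp
qed

lemma xi_A1_rhs_factor:
  assumes X: "algebra D T (x, ch)" and Y: "algebra D T (y, ps)" and A: "algebra D T (a, al)"
    and B: "algebra D T (b, be)" and C: "algebra D T (c, ga)" and DD: "algebra D T (d, de)"
  shows "(((ch \<odot> ((al \<odot> ga) \<cdot> T2c a c)) \<boxplus> (ps \<odot> ((be \<odot> de) \<cdot> T2c b d))) \<cdot> R x y (a \<otimes> c) (b \<otimes> d)) \<cdot>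
      (i (x \<oplus> y) \<odot> (((al \<odot> ga) \<boxplus> (be \<odot> de)) \<cdot> R a b c d)) \<cdot> Asc M1 (x \<oplus> y) (a \<oplus> b) (c \<oplus> d)
    = ((ch \<odot> (al \<odot> ga)) \<boxplus> (ps \<odot> (be \<odot> de))) \<cdot> R1_rhs x y a b c d"
proof -
  note h = X[unfolded b1.algebra_iff] Y[unfolded b1.algebra_iff] A[unfolded b1.algebra_iff]
    B[unfolded b1.algebra_iff] C[unfolded b1.algebra_iff] DD[unfolded b1.algebra_iff]
  let ?H = "(ch \<odot> ((al \<odot> ga) \<cdot> T2c a c)) \<boxplus> (ps \<odot> ((be \<odot> de) \<cdot> T2c b d))"
  let ?G = "(al \<odot> ga) \<boxplus> (be \<odot> de)"
  let ?rest = "R x y (t a \<otimes> t c) (t b \<otimes> t d) \<cdot> (i (x \<oplus> y) \<odot> R a b c d) \<cdot> Asc M1 (x \<oplus> y) (a \<oplus> b) (c \<oplus> d)"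
  have "(?H \<cdot> R x y (a \<otimes> c) (b \<otimes> d)) \<cdot> (i (x \<oplus> y) \<odot> (?G \<cdot> R a b c d)) \<cdot> Asc M1 (x \<oplus> y) (a \<oplus> b) (c \<oplus> d)
      = ?H \<cdot> (R x y (a \<otimes> c) (b \<otimes> d) \<cdot> ((i x \<boxplus> i y) \<odot> ?G)) \<cdot>
        (i (x \<oplus> y) \<odot> R a b c d) \<cdot> Asc M1 (x \<oplus> y) (a \<oplus> b) (c \<oplus> d)"
    using h by (simp add: tenm_merge)
  also have "\<dots> = ?H \<cdot> (((i (t x) \<odot> tm (al \<odot> ga)) \<boxplus> (i (t y) \<odot> tm (be \<odot> de))) \<cdot>
      R x y (t a \<otimes> t c) (t b \<otimes> t d)) \<cdot> (i (x \<oplus> y) \<odot> R a b c d) \<cdot> Asc M1 (x \<oplus> y) (a \<oplus> b) (c \<oplus> d)"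
    using h by (simp del: b2.tenm_id add: R_nat)
  also have "\<dots> = ((ch \<odot> ((al \<odot> ga) \<cdot> (T2c a c \<cdot> tm (al \<odot> ga)))) \<boxplus>
      (ps \<odot> ((be \<odot> de) \<cdot> (T2c b d \<cdot> tm (be \<odot> de))))) \<cdot> ?rest"
    using h by (simp add: tenm_merge)
  also have "\<dots> = ((ch \<odot> ((al \<odot> ga) \<cdot> ((mu a \<odot> mu c) \<cdot> T2c (t a) (t c)))) \<boxplus>
      (ps \<odot> ((be \<odot> de) \<cdot> ((mu b \<odot> mu d) \<cdot> T2c (t b) (t d))))) \<cdot> ?rest"
    by (simp only: b1.tensor_action_T2[OF A C] b1.tensor_action_T2[OF B DD])
  finally show ?thesis
    using h by (simp add: tenm_merge)
qed

abbreviation R2_lhs where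
  "R2_lhs x a y b c d \<equiv> Asc M2 (t x \<otimes> t y) (t a \<otimes> t b) (t c \<otimes> t d) \<cdot>
     (((mu x \<odot> mu y) \<boxplus> (mu a \<odot> mu b)) \<boxplus> i (t c \<otimes> t d)) \<cdot>
     (R (t x) (t a) (t y) (t b) \<boxplus> i (t c \<otimes> t d)) \<cdot>
     ((T2b x a \<odot> T2b y b) \<boxplus> i (t c \<otimes> t d)) \<cdot> R (x \<oplus> a) c (y \<oplus> b) d"

abbreviation R2_rhs where
  "R2_rhs x a y b c d \<equiv> (i (t x \<otimes> t y) \<boxplus> ((mu a \<odot> mu b) \<boxplus> (mu c \<odot> mu d))) \<cdot>
     (i (t x \<otimes> t y) \<boxplus> R (t a) (t c) (t b) (t d)) \<cdot>
     (i (t x \<otimes> t y) \<boxplus> (T2b a c \<odot> T2b b d)) \<cdot>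
     R x (a \<oplus> c) y (b \<oplus> d) \<cdot> (Asc M2 x a c \<odot> Asc M2 y b d)"

lemma R_assoc2:
  assumes "x \<in> Obj D" "a \<in> Obj D" "y \<in> Obj D" "b \<in> Obj D" "c \<in> Obj D" "d \<in> Obj D"
  shows "R2_lhs x a y b c d = R2_rhs x a y b c d"
proof -
  have "\<forall>x\<in>Obj D. \<forall>a\<in>Obj D. \<forall>y\<in>Obj D. \<forall>b\<in>Obj D. \<forall>c\<in>Obj D. \<forall>d\<in>Obj D.
      R2_lhs x a y b c d = R2_rhs x a y b c d"
    using rmatrix unfolding rmatrix_def Let_def by (elim conjE)
  then show ?thesis
    using assms by blast
qed

lemma xi_A2_lhs_factor:
  assumes X: "algebra D T (x, ch)" and Y: "algebra D T (y, ps)" and A: "algebra D T (a, al)"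
    and B: "algebra D T (b, be)" and C: "algebra D T (c, ga)" and DD: "algebra D T (d, de)"
  shows "Asc M2 (x \<otimes> y) (a \<otimes> b) (c \<otimes> d) \<cdot>
      ((((ch \<odot> ps) \<boxplus> (al \<odot> be)) \<cdot> R x a y b) \<boxplus> i (c \<otimes> d)) \<cdot>
      (((((ch \<boxplus> al) \<cdot> T2b x a) \<odot> ((ps \<boxplus> be) \<cdot> T2b y b)) \<boxplus> (ga \<odot> de)) \<cdot> R (x \<oplus> a) c (y \<oplus> b) d)
    = ((ch \<odot> ps) \<boxplus> ((al \<odot> be) \<boxplus> (ga \<odot> de))) \<cdot> R2_lhs x a y b c d"
proof -
  note h = X[unfolded b1.algebra_iff] Y[unfolded b1.algebra_iff] A[unfolded b1.algebra_iff]
    B[unfolded b1.algebra_iff] C[unfolded b1.algebra_iff] DD[unfolded b1.algebra_iff]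
  let ?As = "Asc M2 (x \<otimes> y) (a \<otimes> b) (c \<otimes> d)"
  let ?F = "(ch \<odot> ps) \<boxplus> (al \<odot> be)"
  let ?rest = "((T2b x a \<odot> T2b y b) \<boxplus> i (t c \<otimes> t d)) \<cdot> R (x \<oplus> a) c (y \<oplus> b) d"
  have "?As \<cdot> ((?F \<cdot> R x a y b) \<boxplus> i (c \<otimes> d)) \<cdot>
      (((((ch \<boxplus> al) \<cdot> T2b x a) \<odot> ((ps \<boxplus> be) \<cdot> T2b y b)) \<boxplus> (ga \<odot> de)) \<cdot> R (x \<oplus> a) c (y \<oplus> b) d)
    = ?As \<cdot> ((?F \<cdot> (R x a y b \<cdot> ((ch \<boxplus> al) \<odot> (ps \<boxplus> be)))) \<boxplus> (ga \<odot> de)) \<cdot> ?rest"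
    using h by (simp add: tenm_merge)
  also have "\<dots> = ?As \<cdot> ((?F \<cdot> (((tm ch \<odot> tm ps) \<boxplus> (tm al \<odot> tm be)) \<cdot> R (t x) (t a) (t y) (t b))) \<boxplus> (ga \<odot> de)) \<cdot> ?rest"
    using h by (simp add: R_nat)
  also have "\<dots> = (?As \<cdot> (?F \<boxplus> (ga \<odot> de))) \<cdot>
      (((mu x \<odot> mu y) \<boxplus> (mu a \<odot> mu b)) \<boxplus> i (t c \<otimes> t d)) \<cdot> (R (t x) (t a) (t y) (t b) \<boxplus> i (t c \<otimes> t d)) \<cdot> ?rest"
    using h by (simp add: tenm_merge)
  also have "\<dots> = (((ch \<odot> ps) \<boxplus> ((al \<odot> be) \<boxplus> (ga \<odot> de))) \<cdot> Asc M2 (t x \<otimes> t y) (t a \<otimes> t b) (t c \<otimes> t d)) \<cdot>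
      (((mu x \<odot> mu y) \<boxplus> (mu a \<odot> mu b)) \<boxplus> i (t c \<otimes> t d)) \<cdot> (R (t x) (t a) (t y) (t b) \<boxplus> i (t c \<otimes> t d)) \<cdot> ?rest"
    using h by (simp add: b2.asc_nat)
  finally show ?thesis
    using h by simp
qed

lemma xi_A2_rhs_factor:
  assumes X: "algebra D T (x, ch)" and Y: "algebra D T (y, ps)" and A: "algebra D T (a, al)"
    and B: "algebra D T (b, be)" and C: "algebra D T (c, ga)" and DD: "algebra D T (d, de)"
  shows "(i (x \<otimes> y) \<boxplus> (((al \<odot> be) \<boxplus> (ga \<odot> de)) \<cdot> R a c b d)) \<cdot>
      (((ch \<odot> ps) \<boxplus> (((al \<boxplus> ga) \<cdot> T2b a c) \<odot> ((be \<boxplus> de) \<cdot> T2b b d))) \<cdot> R x (a \<oplus> c) y (b \<oplus> d)) \<cdot>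
      (Asc M2 x a c \<odot> Asc M2 y b d)
    = ((ch \<odot> ps) \<boxplus> ((al \<odot> be) \<boxplus> (ga \<odot> de))) \<cdot> R2_rhs x a y b c d"
proof -
  note h = X[unfolded b1.algebra_iff] Y[unfolded b1.algebra_iff] A[unfolded b1.algebra_iff]
    B[unfolded b1.algebra_iff] C[unfolded b1.algebra_iff] DD[unfolded b1.algebra_iff]
  let ?G = "(al \<odot> be) \<boxplus> (ga \<odot> de)"
  let ?rest = "R x (a \<oplus> c) y (b \<oplus> d) \<cdot> (Asc M2 x a c \<odot> Asc M2 y b d)"
  have "(i (x \<otimes> y) \<boxplus> (?G \<cdot> R a c b d)) \<cdot>
      (((ch \<odot> ps) \<boxplus> (((al \<boxplus> ga) \<cdot> T2b a c) \<odot> ((be \<boxplus> de) \<cdot> T2b b d))) \<cdot> R x (a \<oplus> c) y (b \<oplus> d)) \<cdot>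
      (Asc M2 x a c \<odot> Asc M2 y b d)
    = ((ch \<odot> ps) \<boxplus> ((?G \<cdot> (R a c b d \<cdot> ((al \<boxplus> ga) \<odot> (be \<boxplus> de)))) \<cdot> (T2b a c \<odot> T2b b d))) \<cdot> ?rest"
    using h by (simp add: tenm_merge)
  also have "\<dots> = ((ch \<odot> ps) \<boxplus> ((?G \<cdot> (((tm al \<odot> tm be) \<boxplus> (tm ga \<odot> tm de)) \<cdot> R (t a) (t c) (t b) (t d))) \<cdot>
      (T2b a c \<odot> T2b b d))) \<cdot> ?rest"
    using h by (simp add: R_nat)
  finally show ?thesis
    using h by (simp add: tenm_merge)
qed

lemma xi_A1_EM:
  assumes "x \<in> Obj (EM D T)" "y \<in> Obj (EM D T)" "a \<in> Obj (EM D T)" "b \<in> Obj (EM D T)"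
    "c \<in> Obj (EM D T)" "d \<in> Obj (EM D T)"
  shows "Cmp (EM D T) (TenM L2 (Asc L1 x a c) (Asc L1 y b d))
      (Cmp (EM D T) (XI (Ten L1 x a) (Ten L1 y b) c d) (TenM L1 (XI x y a b) (Idt (EM D T) (Ten L2 c d))))
    = Cmp (EM D T) (XI x y (Ten L1 a c) (Ten L1 b d))
      (Cmp (EM D T) (TenM L1 (Idt (EM D T) (Ten L2 x y)) (XI a b c d)) (Asc L1 (Ten L2 x y) (Ten L2 a b) (Ten L2 c d)))"
proof -
  obtain x0 ch y0 ps a0 al b0 be c0 ga d0 de where
    pairs: "x = (x0, ch)" "y = (y0, ps)" "a = (a0, al)" "b = (b0, be)" "c = (c0, ga)" "d = (d0, de)"
    by (metis surj_pair)
  then have algs: "algebra D T (x0, ch)" "algebra D T (y0, ps)" "algebra D T (a0, al)"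
    "algebra D T (b0, be)" "algebra D T (c0, ga)" "algebra D T (d0, de)"
    using assms by simp_all
  show ?thesis
    using xi_A1_lhs_factor[OF algs] xi_A1_rhs_factor[OF algs] R_assoc1 algs pairs
    by (simp add: xi_unfold b1.algebra_iff)
qed

lemma xi_A2_EM:
  assumes "x \<in> Obj (EM D T)" "y \<in> Obj (EM D T)" "a \<in> Obj (EM D T)" "b \<in> Obj (EM D T)"
    "c \<in> Obj (EM D T)" "d \<in> Obj (EM D T)"
  shows "Cmp (EM D T) (Asc L2 (Ten L1 x y) (Ten L1 a b) (Ten L1 c d))
      (Cmp (EM D T) (TenM L2 (XI x a y b) (Idt (EM D T) (Ten L1 c d))) (XI (Ten L2 x a) c (Ten L2 y b) d))
    = Cmp (EM D T) (TenM L2 (Idt (EM D T) (Ten L1 x y)) (XI a c b d))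
      (Cmp (EM D T) (XI x (Ten L2 a c) y (Ten L2 b d)) (TenM L1 (Asc L2 x a c) (Asc L2 y b d)))"
proof -
  obtain x0 ch y0 ps a0 al b0 be c0 ga d0 de where
    pairs: "x = (x0, ch)" "y = (y0, ps)" "a = (a0, al)" "b = (b0, be)" "c = (c0, ga)" "d = (d0, de)"
    by (metis surj_pair)
  then have algs: "algebra D T (x0, ch)" "algebra D T (y0, ps)" "algebra D T (a0, al)"
    "algebra D T (b0, be)" "algebra D T (c0, ga)" "algebra D T (d0, de)"
    using assms by simp_all
  show ?thesis
    using xi_A2_lhs_factor[OF algs] xi_A2_rhs_factor[OF algs] R_assoc2 algs pairs
    by (simp add: xi_unfold b1.algebra_iff)
qed

lemma R_unit:
  assumes "A \<in> Obj (EM D T)" "B \<in> Obj (EM D T)"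
  shows "((T0c \<odot> snd A) \<boxplus> (T0c \<odot> snd B)) \<cdot> R (MUnit M1) (MUnit M1) (fst A) (fst B) \<cdot> (nu \<odot> i (fst A \<oplus> fst B))
      = (cinv D (Lu M1 (fst A)) \<boxplus> cinv D (Lu M1 (fst B))) \<cdot> Lu M1 (fst A \<oplus> fst B)"
    and "((snd A \<odot> T0c) \<boxplus> (snd B \<odot> T0c)) \<cdot> R (fst A) (fst B) (MUnit M1) (MUnit M1) \<cdot> (i (fst A \<oplus> fst B) \<odot> nu)
      = (cinv D (Ru M1 (fst A)) \<boxplus> cinv D (Ru M1 (fst B))) \<cdot> Ru M1 (fst A \<oplus> fst B)"
    and "(varpi \<boxplus> i (fst A \<otimes> fst B)) \<cdot> ((T0b \<odot> T0b) \<boxplus> (snd A \<odot> snd B)) \<cdot> R (MUnit M2) (fst A) (MUnit M2) (fst B)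
      = cinv D (Lu M2 (fst A \<otimes> fst B)) \<cdot> (Lu M2 (fst A) \<odot> Lu M2 (fst B))"
    and "(i (fst A \<otimes> fst B) \<boxplus> varpi) \<cdot> ((snd A \<odot> snd B) \<boxplus> (T0b \<odot> T0b)) \<cdot> R (fst A) (MUnit M2) (fst B) (MUnit M2)
      = cinv D (Ru M2 (fst A \<otimes> fst B)) \<cdot> (Ru M2 (fst A) \<odot> Ru M2 (fst B))"
  using rmatrix assms unfolding rmatrix_def Let_def by (elim conjE; blast)+

lemma xi_unit_EM:
  assumes a: "a \<in> Obj (EM D T)" and b: "b \<in> Obj (EM D T)"
  shows "Cmp (EM D T) (XI (MUnit L1) (MUnit L1) a b) (TenM L1 (MUnit L1, Ten L2 (MUnit L1) (MUnit L1), nu) (Idt (EM D T) (Ten L2 a b)))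
      = Cmp (EM D T) (TenM L2 (cinv (EM D T) (Lu L1 a)) (cinv (EM D T) (Lu L1 b))) (Lu L1 (Ten L2 a b))"
    and "Cmp (EM D T) (XI a b (MUnit L1) (MUnit L1)) (TenM L1 (Idt (EM D T) (Ten L2 a b)) (MUnit L1, Ten L2 (MUnit L1) (MUnit L1), nu))
      = Cmp (EM D T) (TenM L2 (cinv (EM D T) (Ru L1 a)) (cinv (EM D T) (Ru L1 b))) (Ru L1 (Ten L2 a b))"
    and "Cmp (EM D T) (TenM L2 (Ten L1 (MUnit L2) (MUnit L2), MUnit L2, varpi) (Idt (EM D T) (Ten L1 a b))) (XI (MUnit L2) a (MUnit L2) b)
      = Cmp (EM D T) (cinv (EM D T) (Lu L2 (Ten L1 a b))) (TenM L1 (Lu L2 a) (Lu L2 b))"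
    and "Cmp (EM D T) (TenM L2 (Idt (EM D T) (Ten L1 a b)) (Ten L1 (MUnit L2) (MUnit L2), MUnit L2, varpi)) (XI a (MUnit L2) b (MUnit L2))
      = Cmp (EM D T) (cinv (EM D T) (Ru L2 (Ten L1 a b))) (TenM L1 (Ru L2 a) (Ru L2 b))"
  using R_unit[OF a b] a b
  by (simp_all add: xi_unfold b1.cinv_Lu_EM b1.cinv_Ru_EM b2.cinv_Lu_EM b2.cinv_Ru_EM b1.algebra_lift_ten
      b1.lu_iso b1.ru_iso b2.lu_iso b2.ru_iso b1.algebraD)

theorem duoidal_EM: "duoidal (EM D T) L1 L2 XI
    (MUnit L1, Ten L2 (MUnit L1) (MUnit L1), nu) (Ten L1 (MUnit L2) (MUnit L2), MUnit L2, varpi)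
    (MUnit L1, MUnit L2, iota)"
  unfolding duoidal_def Let_def preduoidal_def
proof (intro conjI ballI)
  show "monoidal (EM D T) L1" "monoidal (EM D T) L2"
    by (rule b1.monoidal_EM b2.monoidal_EM)+
qed (use xi_hom_EM xi_nat_EM monoid_varpi comonoid_nu xi_A1_EM xi_A2_EM xi_unit_EM in auto)

end

theorem mainTheorem2:
  fixes D :: "('o,'m) cat" and M1 M2 :: "('o,'m) mon" and T :: "('o,'m) monad"
    and T2c T2b :: "'o \<Rightarrow> 'o \<Rightarrow> 'm" and T0c T0b :: 'm
    and R :: "'o \<Rightarrow> 'o \<Rightarrow> 'o \<Rightarrow> 'o \<Rightarrow> 'm" and nu varpi iota :: 'm
  assumes "preduoidal D M1 M2"
    and "sep_opmonoidal_monad D M1 M2 T T2c T0c T2b T0b"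
    and "rmatrix D M1 M2 T T2c T0c T2b T0b R nu varpi iota"
  shows "duoidal (EM D T) (lift_mon D M1 T2c T0c) (lift_mon D M2 T2b T0b)
           (xi D M1 M2 T2c T0c T2b T0b R)
           (MUnit (lift_mon D M1 T2c T0c),
            Ten (lift_mon D M2 T2b T0b) (MUnit (lift_mon D M1 T2c T0c)) (MUnit (lift_mon D M1 T2c T0c)),
            nu)
           (Ten (lift_mon D M1 T2c T0c) (MUnit (lift_mon D M2 T2b T0b)) (MUnit (lift_mon D M2 T2b T0b)),
            MUnit (lift_mon D M2 T2b T0b),
            varpi)
           (MUnit (lift_mon D M1 T2c T0c), MUnit (lift_mon D M2 T2b T0b), iota)"
proof -
  \<comment> \<open>preduoidality is already part of \<open>sep_opmonoidal_monad\<close>\<close>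
  interpret rmatrix_on D M1 M2 T T2c T0c T2b T0b R nu varpi iota
    using assms(2,3) by unfold_locales
  show ?thesis
    by (rule duoidal_EM)
qed

end
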